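(* Fix reals $\alpha,\beta,\gamma,\delta\ge0$ with $\alpha+\beta+\gamma+\delta=1$, and set $D:=1-4(\alpha\gamma+\alpha\delta+\beta\gamma)$ and $\mu:=(1-\sqrt D)/2$. Consider $n\to\infty$ along integers $n$ for which $l:=\alpha n$, $m:=(\alpha+\beta)n$, $k:=(\alpha+\gamma)n$ are integers, and let $X$ be distributed according to $p(\cdot\mid n,m,k,l)$, with probability denoted $\Pr_n$. Then for every $\varepsilon>0$, \[ \lim_{n\to\infty}\Pr_n\Bigl[\Bigl|\frac{X}{n}-\mu\Bigr|>\varepsilon\Bigr]=0, \] and consequently $\mathbb E[X]=n\mu+o(n)$.
   Context: For non-negative integers $n,m,k,l$ with $m,k\le n$ and $m+k-n\le l\le\min(m,k)$ (automatic above), let $M:=m-l$, $N:=n-m-k+l$. Let $\mathbb{C}^2$ have orthonormal basis $|0\rangle,|1\rangle$ and give $(\mathbb{C}^2)^{\otimes n}$ the induced Hermitian inner product. Define $|\Xi_{n,m|k,l}\rangle:=|1\rangle^{\otimes l}\otimes|0\rangle^{\otimes(k-l)}\otimes\binom{M+N}{M}^{-1/2}\sum_{I}|I\rangle$, the sum over all $I\in\{0,1\}^{n-k}$ with exactly $M$ ones (where $|i_1\cdots i_r\rangle=|i_1\rangle\otimes\cdots\otimes|i_r\rangle$). $\mathfrak S_n$ acts on $(\mathbb{C}^2)^{\otimes n}$ by permuting tensor factors. For $0\le x\le\lfloor n/2\rfloor$, $\mathsf P_{(n-x,x)}$ is the orthogonal projection onto the isotypic component of the irreducible $\mathfrak S_n$-representation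 labelled by the partition $(n-x,x)$, and $p(x\mid n,m,k,l):=\langle\Xi_{n,m|k,l}|\mathsf P_{(n-x,x)}|\Xi_{n,m|k,l}\rangle$, a probability mass function on $\{0,\dots,\lfloor n/2\rfloor\}$. *)

theory Defs
  imports Complex_Main "HOL-Library.Landau_Symbols" "HOL-Combinatorics.Permutations"
begin

text \<open>Vectors of (C^2)^{\<otimes>n}: functions on bit strings, a bit string of length n being
  encoded by the set of positions (in 0..n-1) carrying a 1; position i is tensor factor i+1.
  Only values on subsets of {..<n} matter; V_n is the set of vectors supported there.\<close>

type_synonym qvec = "nat set \<Rightarrow> complex"

definition qspace :: "nat \<Rightarrow> qvec set" where
  "qspace n = {v. \<forall>S. \<not> S \<subseteq> {..<n} \<longrightarrow> v S = 0}"

definition qadd :: "qvec \<Rightarrow> qvec \<Rightarrow> qvec" where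
  "qadd u v = (\<lambda>S. u S + v S)"

definition qdiff :: "qvec \<Rightarrow> qvec \<Rightarrow> qvec" where
  "qdiff u v = (\<lambda>S. u S - v S)"

definition qscale :: "complex \<Rightarrow> qvec \<Rightarrow> qvec" where
  "qscale c v = (\<lambda>S. c * v S)"

definition qinner :: "nat \<Rightarrow> qvec \<Rightarrow> qvec \<Rightarrow> complex" where
  "qinner n u v = (\<Sum>S\<in>Pow {..<n}. cnj (u S) * v S)"

definition qspan :: "qvec set \<Rightarrow> qvec set" where
  "qspan A = {(\<lambda>S. \<Sum>i<r. c i * w i S) | (r::nat) c w. \<forall>i<r. w i \<in> A}"

text \<open>Action of a permutation of the tensor factors: sigma maps the basis vector |I> with
  ones at positions T to the basis vector with ones at positions sigma ` T.\<close>
definition perm_act :: "(nat \<Rightarrow> nat) \<Rightarrow> qvec \<Rightarrow> qvec" where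
  "perm_act \<sigma> v = (\<lambda>T. v (inv \<sigma> ` T))"

text \<open>Polytabloid of a two-row tableau with columns (a_i, b_i) (a_i in row 1, b_i in row 2),
  realised inside the permutation module M^{(n-x,x)} = span of basis vectors of weight x:
  it is the tensor product of the vectors |0>_a|1>_b - |1>_a|0>_b over the columns and |0>
  on the remaining positions.\<close>
definition pair_set :: "(nat \<times> nat) list \<Rightarrow> nat set" where
  "pair_set ps = set (map fst ps) \<union> set (map snd ps)"

definition polytabloid :: "(nat \<times> nat) list \<Rightarrow> qvec" where
  "polytabloid ps = (\<lambda>T. if T \<subseteq> pair_set ps \<and> (\<forall>(a,b)\<in>set ps. (a \<in> T \<longleftrightarrow> b \<notin> T))
       then (-1) ^ card (set (map fst ps) \<inter> T) else 0)"

definition tableau_cols :: "nat \<Rightarrow> nat \<Rightarrow> (nat \<times> nat) list set" where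
  "tableau_cols n x = {ps. length ps = x \<and> distinct (map fst ps @ map snd ps) \<and> pair_set ps \<subseteq> {..<n}}"

definition specht :: "nat \<Rightarrow> nat \<Rightarrow> qvec set" where
  "specht n x = qspan (polytabloid ` tableau_cols n x)"

definition equivariant_maps :: "nat \<Rightarrow> nat \<Rightarrow> (qvec \<Rightarrow> qvec) set" where
  "equivariant_maps n x = {f.
      (\<forall>u\<in>specht n x. f u \<in> qspace n) \<and>
      (\<forall>u\<in>specht n x. \<forall>v\<in>specht n x. f (qadd u v) = qadd (f u) (f v)) \<and>
      (\<forall>u\<in>specht n x. \<forall>c. f (qscale c u) = qscale c (f u)) \<and>
      (\<forall>\<sigma> u. \<sigma> permutes {..<n} \<and> u \<in> specht n x \<longrightarrow> f (perm_act \<sigma> u) = perm_act \<sigma> (f u))}"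

definition isotypic :: "nat \<Rightarrow> nat \<Rightarrow> qvec set" where
  "isotypic n x = qspan (\<Union>f\<in>equivariant_maps n x. f ` specht n x)"

definition orth_proj :: "nat \<Rightarrow> qvec set \<Rightarrow> qvec \<Rightarrow> qvec" where
  "orth_proj n W v = (THE w. w \<in> W \<and> (\<forall>u\<in>W. qinner n u (qdiff v w) = 0))"

text \<open>The state Xi_{n,m|k,l}: ones on positions 0..l-1, zeros on positions l..k-1, and the
  normalised uniform superposition of weight-(m-l) strings on positions k..n-1.\<close>
definition Xi :: "nat \<Rightarrow> nat \<Rightarrow> nat \<Rightarrow> nat \<Rightarrow> qvec" where
  "Xi n m k l = (\<lambda>T. if T \<subseteq> {..<n} \<and> T \<inter> {..<k} = {..<l} \<and> card (T - {..<k}) = m - l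
       then complex_of_real (1 / sqrt (real ((n - k) choose (m - l)))) else 0)"

definition pmf_p :: "nat \<Rightarrow> nat \<Rightarrow> nat \<Rightarrow> nat \<Rightarrow> nat \<Rightarrow> real" where
  "pmf_p n m k l x = Re (qinner n (Xi n m k l) (orth_proj n (isotypic n x) (Xi n m k l)))"

end

theory Submission
  imports Defs
begin

text \<open>
  The raising and lowering operators R, L (adding, resp. removing, a one in all possible
  positions) commute with the permutation action and satisfy [L, R] = n - 2w on weight-w
  vectors. Hence every weight-w vector with 2w \<le> n is a sum of vectors R^(w-x) k_x with
  k_x of weight x in the kernel of L, and that kernel is exactly the Specht module S^(n-x,x)
  (induction on n, by extending polytabloids by the column (a, n)); weights above n/2 are
  reduced to this case by complementing bit strings. Such a sum is the decomposition of the
  vector into isotypic components. These components are eigenvectors, with the distinct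
  eigenvalues 2x(n-x+1), of the self-adjoint operator K = \<Sum>_{i\<noteq>j} (1 - (i j)), so they are
  orthogonal and p(x) is the squared norm of the x-th component of \<Xi>.

  On the other hand K = 2(w(n-w+1) - R L) on weight w, and a direct count shows that R L \<Xi>
  differs from a multiple of \<Xi> by a vector of squared norm O(n^3), so
  \<Sum>_x (2x(n-x+1) - c)^2 p(x) = O(n^3) with c = 2\<mu>(1-\<mu>)n^2 + O(n). Since
  2x(n-x+1) - 2\<mu>(1-\<mu>)n^2 is of order \<epsilon>^2 n^2 when |x/n - \<mu>| > \<epsilon>, Chebyshev's inequality
  bounds the tail probability by O(1/(\<epsilon>^4 n)), and the mean follows because X/n is bounded.
\<close>

definition qzero :: qvec where "qzero = (\<lambda>S. 0)"

definition qsubspace :: "qvec set \<Rightarrow> bool" where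
  "qsubspace W \<longleftrightarrow> qzero \<in> W \<and> (\<forall>u\<in>W. \<forall>v\<in>W. qadd u v \<in> W) \<and> (\<forall>u\<in>W. \<forall>c. qscale c u \<in> W)"

definition qlinear :: "(qvec \<Rightarrow> qvec) \<Rightarrow> bool" where
  "qlinear f \<longleftrightarrow> (\<forall>u v. f (qadd u v) = qadd (f u) (f v)) \<and> (\<forall>c u. f (qscale c u) = qscale c (f u))"

lemma qsubspace_zero: "qsubspace W \<Longrightarrow> qzero \<in> W"
  by (simp add: qsubspace_def)

lemma qsubspace_add: "qsubspace W \<Longrightarrow> u \<in> W \<Longrightarrow> v \<in> W \<Longrightarrow> qadd u v \<in> W"
  by (simp add: qsubspace_def)

lemma qsubspace_scale: "qsubspace W \<Longrightarrow> u \<in> W \<Longrightarrow> qscale c u \<in> W"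
  by (simp add: qsubspace_def)

lemma qsubspace_diff:
  assumes "qsubspace W" "u \<in> W" "v \<in> W"
  shows "qdiff u v \<in> W"
proof -
  have "qdiff u v = qadd u (qscale (-1) v)" by (simp add: qdiff_def qadd_def qscale_def)
  then show ?thesis using assms by (simp add: qsubspace_add qsubspace_scale)
qed

lemma qsubspace_lincomb:
  fixes c :: "'a \<Rightarrow> complex"
  assumes "qsubspace W" "finite A" "\<And>a. a \<in> A \<Longrightarrow> g a \<in> W"
  shows "(\<lambda>S. \<Sum>a\<in>A. c a * g a S) \<in> W"
  using assms(2,3)
proof (induction A rule: finite_induct)
  case empty then show ?case using qsubspace_zero[OF assms(1)] by (simp add: qzero_def)
next
  case (insert x F)
  have "(\<lambda>S. \<Sum>a\<in>insert x F. c a * g a S) = qadd (qscale (c x) (g x)) (\<lambda>S. \<Sum>a\<in>F. c a * g a S)"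
    using insert by (simp add: qadd_def qscale_def)
  then show ?case using insert assms(1) by (simp add: qsubspace_add qsubspace_scale)
qed

lemma qsubspace_sum:
  assumes "qsubspace W" "finite A" "\<And>a. a \<in> A \<Longrightarrow> g a \<in> W"
  shows "(\<lambda>S. \<Sum>a\<in>A. g a S) \<in> W"
  using qsubspace_lincomb[OF assms, where c = "\<lambda>_. 1"] by simp

lemma qsubspace_Int: "qsubspace A \<Longrightarrow> qsubspace B \<Longrightarrow> qsubspace (A \<inter> B)"
  by (simp add: qsubspace_def)

lemma qsubspace_qspace: "qsubspace (qspace n)"
  by (simp add: qsubspace_def qspace_def qzero_def qadd_def qscale_def)

lemma sum_lessThan_add:
  "(\<Sum>i<r1 + r2. (f::nat \<Rightarrow> 'a::comm_monoid_add) i) = (\<Sum>i<r1. f i) + (\<Sum>i<r2. f (r1 + i))"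
  by (induction r2) (simp_all add: add.assoc)

lemma qsubspace_qspan: "qsubspace (qspan A)"
  unfolding qsubspace_def
proof (intro conjI ballI allI)
  show "qzero \<in> qspan A" unfolding qspan_def qzero_def by (rule CollectI, rule exI[of _ 0]) auto
next
  fix u v assume "u \<in> qspan A" "v \<in> qspan A"
  then obtain r1 r2 :: nat and c1 c2 w1 w2
    where u: "u = (\<lambda>S. \<Sum>i<r1. c1 i * w1 i S)" "\<forall>i<r1. w1 i \<in> A"
      and v: "v = (\<lambda>S. \<Sum>i<r2. c2 i * w2 i S)" "\<forall>i<r2. w2 i \<in> A"
    unfolding qspan_def by blast
  define c where "c i = (if i < r1 then c1 i else c2 (i - r1))" for i
  define w where "w i = (if i < r1 then w1 i else w2 (i - r1))" for i
  have "qadd u v = (\<lambda>S. \<Sum>i<r1+r2. c i * w i S)"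
    unfolding qadd_def u v sum_lessThan_add c_def w_def by simp
  moreover have "\<forall>i<r1+r2. w i \<in> A" using u v unfolding w_def by auto
  ultimately show "qadd u v \<in> qspan A" unfolding qspan_def by blast
next
  fix u c assume "u \<in> qspan A"
  then obtain r :: nat and c1 w where u: "u = (\<lambda>S. \<Sum>i<r. c1 i * w i S)" "\<forall>i<r. w i \<in> A"
    unfolding qspan_def by blast
  have "qscale c u = (\<lambda>S. \<Sum>i<r. (c * c1 i) * w i S)"
    unfolding qscale_def u by (simp add: sum_distrib_left mult.assoc)
  then show "qscale c u \<in> qspan A" using u(2) unfolding qspan_def
    by (intro CollectI exI[of _ r] exI[of _ "\<lambda>i. c * c1 i"] exI[of _ w]) auto
qed

lemma qspan_superset: "a \<in> A \<Longrightarrow> a \<in> qspan A"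
  unfolding qspan_def
  by (rule CollectI, rule exI[of _ 1], rule exI[of _ "\<lambda>_. 1"], rule exI[of _ "\<lambda>_. a"]) auto

lemma qspan_minimal:
  assumes "qsubspace W" "A \<subseteq> W"
  shows "qspan A \<subseteq> W"
proof
  fix u assume "u \<in> qspan A"
  then obtain r :: nat and c w where u: "u = (\<lambda>S. \<Sum>i<r. c i * w i S)" "\<forall>i<r. w i \<in> A"
    unfolding qspan_def by blast
  show "u \<in> W" unfolding u(1) by (rule qsubspace_lincomb[OF assms(1)]) (use u(2) assms(2) in auto)
qed

lemma qspan_mono: "A \<subseteq> B \<Longrightarrow> qspan A \<subseteq> qspan B"
  by (rule qspan_minimal[OF qsubspace_qspan]) (auto intro: qspan_superset)

lemma qlinear_add: "qlinear f \<Longrightarrow> f (qadd u v) = qadd (f u) (f v)"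
  by (simp add: qlinear_def)

lemma qlinear_scale: "qlinear f \<Longrightarrow> f (qscale c u) = qscale c (f u)"
  by (simp add: qlinear_def)

lemma qlinear_zero:
  assumes "qlinear f"
  shows "f qzero = qzero"
proof -
  have "qzero = qscale 0 qzero" by (simp add: qscale_def qzero_def)
  then have "f qzero = qscale 0 (f qzero)" using assms by (metis qlinear_scale)
  then show ?thesis by (simp add: qscale_def qzero_def)
qed

lemma qlinear_diff:
  assumes "qlinear f"
  shows "f (qdiff u v) = qdiff (f u) (f v)"
proof -
  have "qdiff u v = qadd u (qscale (-1) v)" "qdiff (f u) (f v) = qadd (f u) (qscale (-1) (f v))"
    by (simp_all add: qdiff_def qadd_def qscale_def)
  then show ?thesis using assms by (simp add: qlinear_add qlinear_scale)
qed

lemma qlinear_lincomb: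
  fixes c :: "'a \<Rightarrow> complex"
  assumes "qlinear f" "finite A"
  shows "f (\<lambda>S. \<Sum>a\<in>A. c a * g a S) = (\<lambda>S. \<Sum>a\<in>A. c a * f (g a) S)"
  using assms(2)
proof (induction A rule: finite_induct)
  case empty then show ?case using qlinear_zero[OF assms(1)] by (simp add: qzero_def)
next
  case (insert x F)
  have "(\<lambda>S. \<Sum>a\<in>insert x F. c a * g a S) = qadd (qscale (c x) (g x)) (\<lambda>S. \<Sum>a\<in>F. c a * g a S)"
    using insert by (simp add: qadd_def qscale_def)
  then have "f (\<lambda>S. \<Sum>a\<in>insert x F. c a * g a S)
      = qadd (qscale (c x) (f (g x))) (f (\<lambda>S. \<Sum>a\<in>F. c a * g a S))"
    using assms(1) by (simp add: qlinear_add qlinear_scale)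
  then show ?case using insert by (simp add: qadd_def qscale_def)
qed

lemma qlinear_sum:
  assumes "qlinear f" "finite A"
  shows "f (\<lambda>S. \<Sum>a\<in>A. g a S) = (\<lambda>S. \<Sum>a\<in>A. f (g a) S)"
  using qlinear_lincomb[OF assms, where c = "\<lambda>_. 1"] by simp

lemma qlinear_comp: "qlinear f \<Longrightarrow> qlinear g \<Longrightarrow> qlinear (f \<circ> g)"
  by (simp add: qlinear_def)

lemma qlinear_funpow: "qlinear f \<Longrightarrow> qlinear (f ^^ j)"
  by (induction j) (simp_all add: qlinear_def qlinear_comp)

lemma qlinear_perm_act: "qlinear (perm_act \<sigma>)"
  by (simp add: qlinear_def perm_act_def qadd_def qscale_def)

lemma qsubspace_kernel: "qlinear f \<Longrightarrow> qsubspace {v. f v = qzero}"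
  using qlinear_zero
  by (simp add: qsubspace_def qlinear_add qlinear_scale) (simp add: qzero_def qadd_def qscale_def)

lemma qlinear_qspan:
  assumes "qlinear f" "\<And>a. a \<in> A \<Longrightarrow> f a \<in> qspan B" "u \<in> qspan A"
  shows "f u \<in> qspan B"
proof -
  have "qsubspace {v. f v \<in> qspan B}"
    unfolding qsubspace_def using qsubspace_qspan[of B] qlinear_zero[OF assms(1)]
    by (simp add: qlinear_add[OF assms(1)] qlinear_scale[OF assms(1)]
        qsubspace_add qsubspace_scale qsubspace_zero)
  then have "qspan A \<subseteq> {v. f v \<in> qspan B}" by (rule qspan_minimal) (use assms(2) in auto)
  then show ?thesis using assms(3) by auto
qed

lemma qspaceD: "v \<in> qspace n \<Longrightarrow> \<not> S \<subseteq> {..<n} \<Longrightarrow> v S = 0"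
  by (simp add: qspace_def)

lemma finite_subset_lessThan: "(S::nat set) \<subseteq> {..<n} \<Longrightarrow> finite S"
  by (erule finite_subset) simp

definition qnorm_sq :: "nat \<Rightarrow> qvec \<Rightarrow> real" where
  "qnorm_sq n v = (\<Sum>S\<in>Pow {..<n}. (cmod (v S))^2)"

lemma qinner_self_qnorm_sq: "qinner n v v = complex_of_real (qnorm_sq n v)"
  unfolding qinner_def qnorm_sq_def of_real_sum
  by (intro sum.cong refl) (simp only: complex_norm_square mult.commute)

lemma qnorm_sq_nonneg: "qnorm_sq n v \<ge> 0"
  unfolding qnorm_sq_def by (simp add: sum_nonneg)

lemma qnorm_sq_eq_0:
  assumes "v \<in> qspace n" "qnorm_sq n v = 0"
  shows "v = qzero"
proof
  fix S
  show "v S = qzero S"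
  proof (cases "S \<subseteq> {..<n}")
    case True
    have "(cmod (v S))^2 = 0"
      using assms(2) True unfolding qnorm_sq_def by (subst (asm) sum_nonneg_eq_0_iff) auto
    then show ?thesis by (simp add: qzero_def)
  qed (use assms(1) in \<open>simp add: qspaceD qzero_def\<close>)
qed

lemma qnorm_sq_scale: "qnorm_sq n (\<lambda>S. a * v S) = (cmod a)^2 * qnorm_sq n v"
  unfolding qnorm_sq_def by (simp add: norm_mult power_mult_distrib sum_distrib_left)

lemma qinner_scale_right: "qinner n u (\<lambda>S. a * v S) = a * qinner n u v"
  unfolding qinner_def by (simp add: sum_distrib_left algebra_simps)

lemma qinner_diff_right: "qinner n u (\<lambda>S. a S - b S) = qinner n u a - qinner n u b"
  unfolding qinner_def by (simp add: right_diff_distrib sum_subtractf)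

lemma qinner_lincomb_right:
  "finite A \<Longrightarrow> qinner n u (\<lambda>S. \<Sum>y\<in>A. a y * f y S) = (\<Sum>y\<in>A. a y * qinner n u (f y))"
  unfolding qinner_def by (simp add: sum_distrib_left sum.swap[of _ A] algebra_simps)

lemma qinner_lincomb_left:
  "finite A \<Longrightarrow> qinner n (\<lambda>S. \<Sum>y\<in>A. a y * f y S) w = (\<Sum>y\<in>A. cnj (a y) * qinner n (f y) w)"
  unfolding qinner_def by (simp add: sum_distrib_left sum_distrib_right sum.swap[of _ A] algebra_simps)

section \<open>Raising and lowering operators\<close>

definition qraise :: "nat \<Rightarrow> qvec \<Rightarrow> qvec" where
  "qraise n v = (\<lambda>S. if S \<subseteq> {..<n} then (\<Sum>j\<in>S. v (S - {j})) else 0)"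

definition qlower :: "nat \<Rightarrow> qvec \<Rightarrow> qvec" where
  "qlower n v = (\<lambda>S. if S \<subseteq> {..<n} then (\<Sum>i\<in>{..<n} - S. v (insert i S)) else 0)"

definition weight_space :: "nat \<Rightarrow> nat \<Rightarrow> qvec set" where
  "weight_space n w = {v \<in> qspace n. \<forall>S. card S \<noteq> w \<longrightarrow> v S = 0}"

lemma qlinear_qraise: "qlinear (qraise n)"
  by (simp add: qlinear_def qraise_def qadd_def qscale_def sum.distrib sum_distrib_left fun_eq_iff)

lemma qlinear_qlower: "qlinear (qlower n)"
  by (simp add: qlinear_def qlower_def qadd_def qscale_def sum.distrib sum_distrib_left fun_eq_iff)

lemma qsubspace_weight_space: "qsubspace (weight_space n w)"
  by (simp add: qsubspace_def weight_space_def qspace_def qzero_def qadd_def qscale_def)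

lemma weight_spaceD: "v \<in> weight_space n w \<Longrightarrow> card S \<noteq> w \<Longrightarrow> v S = 0"
  by (simp add: weight_space_def)

lemma weight_spaceD_outside: "v \<in> weight_space n w \<Longrightarrow> \<not> S \<subseteq> {..<n} \<Longrightarrow> v S = 0"
  by (simp add: weight_space_def qspace_def)

lemma weight_space_qspace: "v \<in> weight_space n w \<Longrightarrow> v \<in> qspace n"
  by (simp add: weight_space_def)

lemma qraise_qspace: "qraise n u \<in> qspace n"
  by (simp add: qraise_def qspace_def)

lemma qlower_qspace: "qlower n u \<in> qspace n"
  by (simp add: qlower_def qspace_def)

lemma qraise_weight_space:
  assumes "u \<in> weight_space n x"
  shows "qraise n u \<in> weight_space n (Suc x)"
  unfolding weight_space_def
proof (intro CollectI conjI allI impI)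
  show "qraise n u \<in> qspace n" by (rule qraise_qspace)
  fix S :: "nat set" assume c: "card S \<noteq> Suc x"
  show "qraise n u S = 0"
  proof (cases "S \<subseteq> {..<n}")
    case True
    then have f: "finite S" by (rule finite_subset_lessThan)
    have "u (S - {j}) = 0" if "j \<in> S" for j
    proof -
      have "card (S - {j}) = card S - 1" "card S \<ge> 1"
        using that f by (auto simp: Suc_le_eq card_gt_0_iff)
      then have "card (S - {j}) \<noteq> x" using c by linarith
      then show ?thesis using assms weight_spaceD by blast
    qed
    then show ?thesis using True by (simp add: qraise_def)
  qed (simp add: qraise_def)
qed

lemma qlower_weight_space:
  assumes "u \<in> weight_space n x"
  shows "qlower n u \<in> weight_space n (x - 1)"
  unfolding weight_space_def
proof (intro CollectI conjI allI impI)
  show "qlower n u \<in> qspace n" by (rule qlower_qspace)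
  fix S :: "nat set" assume c: "card S \<noteq> x - 1"
  show "qlower n u S = 0"
  proof (cases "S \<subseteq> {..<n}")
    case True
    then have f: "finite S" by (rule finite_subset_lessThan)
    have "u (insert i S) = 0" if "i \<in> {..<n} - S" for i
    proof -
      have "card (insert i S) = Suc (card S)" using that f by simp
      then have "card (insert i S) \<noteq> x" using c by linarith
      then show ?thesis using assms weight_spaceD by blast
    qed
    then show ?thesis using True by (simp add: qlower_def)
  qed (simp add: qlower_def)
qed

lemma qlower_weight_zero:
  assumes "u \<in> weight_space n 0"
  shows "qlower n u = qzero"
proof -
  have "u (insert i S) = 0" if "S \<subseteq> {..<n}" for i S
  proof -
    have "finite S" using that by (rule finite_subset_lessThan)
    then have "card (insert i S) \<noteq> 0" by simp
    then show ?thesis using weight_spaceD[OF assms] by blast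
  qed
  then show ?thesis by (auto simp: qlower_def qzero_def fun_eq_iff)
qed

lemma qraise_power_weight_space: "k \<in> weight_space n x \<Longrightarrow> (qraise n ^^ j) k \<in> weight_space n (x + j)"
  by (induction j) (simp_all add: qraise_weight_space)

lemma qraise_qlower_apply:
  assumes "S \<subseteq> {..<n}"
  shows "qraise n (qlower n u) S
    = of_nat (card S) * u S + (\<Sum>j\<in>S. \<Sum>i\<in>{..<n} - S. u (insert i (S - {j})))"
proof -
  have "qraise n (qlower n u) S = (\<Sum>j\<in>S. \<Sum>i\<in>{..<n} - (S - {j}). u (insert i (S - {j})))"
    using assms by (simp add: qraise_def qlower_def subset_iff)
  also have "\<dots> = (\<Sum>j\<in>S. u S + (\<Sum>i\<in>{..<n} - S. u (insert i (S - {j}))))"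
  proof (rule sum.cong[OF refl])
    fix j assume j: "j \<in> S"
    have e: "{..<n} - (S - {j}) = insert j ({..<n} - S)" using j assms by auto
    have "insert j (S - {j}) = S" using j by auto
    then show "(\<Sum>i\<in>{..<n} - (S - {j}). u (insert i (S - {j})))
        = u S + (\<Sum>i\<in>{..<n} - S. u (insert i (S - {j})))"
      unfolding e by (subst sum.insert) auto
  qed
  finally show ?thesis by (simp add: sum.distrib)
qed

lemma qlower_qraise_apply:
  assumes "S \<subseteq> {..<n}"
  shows "qlower n (qraise n u) S
    = of_nat (n - card S) * u S + (\<Sum>j\<in>S. \<Sum>i\<in>{..<n} - S. u (insert i (S - {j})))"
proof -
  have f: "finite S" using assms by (rule finite_subset_lessThan)
  have "qlower n (qraise n u) S = (\<Sum>i\<in>{..<n} - S. \<Sum>j\<in>insert i S. u (insert i S - {j}))"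
    using assms by (simp add: qraise_def qlower_def subset_iff)
  also have "\<dots> = (\<Sum>i\<in>{..<n} - S. u S + (\<Sum>j\<in>S. u (insert i (S - {j}))))"
  proof (rule sum.cong[OF refl])
    fix i assume i: "i \<in> {..<n} - S"
    have "insert i S - {i} = S" using i by auto
    moreover have "insert i S - {j} = insert i (S - {j})" if "j \<in> S" for j using that i by auto
    ultimately show "(\<Sum>j\<in>insert i S. u (insert i S - {j})) = u S + (\<Sum>j\<in>S. u (insert i (S - {j})))"
      using i f by (simp add: sum.insert)
  qed
  also have "\<dots> = of_nat (card ({..<n} - S)) * u S + (\<Sum>i\<in>{..<n} - S. \<Sum>j\<in>S. u (insert i (S - {j})))"
    by (simp add: sum.distrib)
  also have "card ({..<n} - S) = n - card S" using assms f by (simp add: card_Diff_subset)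
  finally show ?thesis by (simp add: sum.swap[of _ "{..<n} - S"])
qed

lemma card_le_of_subset_lessThan: "S \<subseteq> {..<n} \<Longrightarrow> card S \<le> n"
  by (metis card_lessThan card_mono finite_lessThan)

lemma qlower_qraise_commute:
  assumes "u \<in> qspace n"
  shows "qlower n (qraise n u) S = qraise n (qlower n u) S + (of_nat n - 2 * of_nat (card S)) * u S"
proof (cases "S \<subseteq> {..<n}")
  case True
  then have e: "(of_nat (n - card S) :: complex) = of_nat n - of_nat (card S)"
    by (simp add: of_nat_diff card_le_of_subset_lessThan)
  show ?thesis
    using qraise_qlower_apply[OF True, of u] qlower_qraise_apply[OF True, of u]
    unfolding e by (simp add: algebra_simps)
next
  case False then show ?thesis using assms by (simp add: qraise_def qlower_def qspaceD)
qed

lemma qlower_qraise_weight_space: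
  assumes "u \<in> weight_space n x"
  shows "qlower n (qraise n u) = (\<lambda>S. qraise n (qlower n u) S + (of_nat n - 2 * of_nat x) * u S)"
proof
  fix S
  show "qlower n (qraise n u) S = qraise n (qlower n u) S + (of_nat n - 2 * of_nat x) * u S"
    using qlower_qraise_commute[OF weight_space_qspace[OF assms], of S] weight_spaceD[OF assms, of S]
    by (cases "card S = x") auto
qed

lemma qinner_qraise: "qinner n (qraise n u) v = qinner n u (qlower n v)"
proof -
  have "qinner n (qraise n u) v = (\<Sum>S\<in>Pow {..<n}. \<Sum>j\<in>S. cnj (u (S - {j})) * v S)"
    unfolding qinner_def qraise_def by (auto intro!: sum.cong simp: sum_distrib_right)
  also have "\<dots> = (\<Sum>(S,j)\<in>Sigma (Pow {..<n}) (\<lambda>S. S). cnj (u (S - {j})) * v S)"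
    by (rule sum.Sigma) (auto intro: finite_subset_lessThan)
  also have "\<dots> = (\<Sum>(T,i)\<in>Sigma (Pow {..<n}) (\<lambda>T. {..<n} - T). cnj (u T) * v (insert i T))"
    by (rule sum.reindex_bij_witness[where i = "\<lambda>(T,i). (insert i T, i)" and j = "\<lambda>(S,j). (S - {j}, j)"])
       (auto simp: insert_absorb)
  also have "\<dots> = (\<Sum>T\<in>Pow {..<n}. \<Sum>i\<in>{..<n} - T. cnj (u T) * v (insert i T))"
    by (rule sum.Sigma[symmetric]) auto
  also have "\<dots> = qinner n u (qlower n v)"
    unfolding qinner_def qlower_def by (auto intro!: sum.cong simp: sum_distrib_left)
  finally show ?thesis .
qed

text \<open>Vectors killed by the lowering operator are called primitive.\<close>

lemma primitive_above_half_eq_0: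
  assumes "u \<in> weight_space n x" "qlower n u = qzero" "n < 2 * x"
  shows "u = qzero"
proof -
  have "qinner n (qraise n u) (qraise n u) = qinner n u (qlower n (qraise n u))" by (rule qinner_qraise)
  also have "\<dots> = qinner n u (\<lambda>S. qraise n (qlower n u) S + (of_nat n - 2 * of_nat x) * u S)"
    using qlower_qraise_weight_space[OF assms(1)] by simp
  also have "qraise n (qlower n u) = qzero" using assms(2) qlinear_zero[OF qlinear_qraise] by simp
  finally have "qinner n (qraise n u) (qraise n u) = (of_nat n - 2 * of_nat x) * qinner n u u"
    by (simp add: qzero_def qinner_scale_right)
  then have "complex_of_real (qnorm_sq n (qraise n u))
      = complex_of_real ((real n - 2 * real x) * qnorm_sq n u)"
    by (simp add: qinner_self_qnorm_sq)
  then have e: "qnorm_sq n (qraise n u) = (real n - 2 * real x) * qnorm_sq n u"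
    using of_real_eq_iff by blast
  have "real n - 2 * real x < 0" using assms(3) by simp
  then have "qnorm_sq n u = 0" using e qnorm_sq_nonneg[of n "qraise n u"] qnorm_sq_nonneg[of n u]
    by (metis mult_neg_pos order_less_le not_le)
  then show ?thesis using qnorm_sq_eq_0 weight_space_qspace[OF assms(1)] by blast
qed

lemma qlower_qraise_power_primitive:
  assumes "k \<in> weight_space n x" "qlower n k = qzero"
  shows "qlower n ((qraise n ^^ Suc j) k)
    = (\<lambda>S. (of_nat (Suc j) * (of_nat n - 2 * of_nat x - of_nat j)) * (qraise n ^^ j) k S)"
proof (induction j)
  case 0
  have "qraise n (qlower n k) = qzero" using assms(2) qlinear_zero[OF qlinear_qraise] by simp
  then show ?case using qlower_qraise_weight_space[OF assms(1)] by (simp add: qzero_def)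
next
  case (Suc j)
  let ?c = "of_nat (Suc j) * (of_nat n - 2 * of_nat x - of_nat j) :: complex"
  have h: "(qraise n ^^ Suc j) k \<in> weight_space n (x + Suc j)"
    by (rule qraise_power_weight_space[OF assms(1)])
  have "qlower n ((qraise n ^^ Suc (Suc j)) k) = qlower n (qraise n ((qraise n ^^ Suc j) k))" by simp
  also have "\<dots> = (\<lambda>S. qraise n (qlower n ((qraise n ^^ Suc j) k)) S
      + (of_nat n - 2 * of_nat (x + Suc j)) * (qraise n ^^ Suc j) k S)"
    by (rule qlower_qraise_weight_space[OF h])
  also have "qlower n ((qraise n ^^ Suc j) k) = qscale ?c ((qraise n ^^ j) k)"
    using Suc by (simp add: qscale_def)
  also have "qraise n \<dots> = qscale ?c ((qraise n ^^ Suc j) k)"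
    by (simp add: qlinear_scale[OF qlinear_qraise])
  finally show ?case by (simp add: qscale_def fun_eq_iff algebra_simps)
qed


lemma qlower_qraise_primitive_lincomb:
  assumes k: "\<forall>x\<le>w. k x \<in> weight_space n x \<and> qlower n (k x) = qzero" and w: "2 * Suc w \<le> n"
  defines "c x \<equiv> 1 / (of_nat (Suc (w - x)) * (of_nat n - 2 * of_nat x - of_nat (w - x)) :: complex)"
  shows "qlower n (\<lambda>S. \<Sum>x\<le>w. c x * (qraise n ^^ Suc (w - x)) (k x) S)
    = (\<lambda>S. \<Sum>x\<le>w. (qraise n ^^ (w - x)) (k x) S)"
proof -
  have "c x * qlower n ((qraise n ^^ Suc (w - x)) (k x)) S = (qraise n ^^ (w - x)) (k x) S"
    if x: "x \<le> w" for x S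
  proof -
    have "real n - 2 * real x - real (w - x) > 0" using x w by (simp add: of_nat_diff)
    then have "(of_nat n - 2 * of_nat x - of_nat (w - x) :: complex) \<noteq> 0"
      by (metis (mono_tags) of_real_of_nat_eq of_real_diff of_real_mult of_real_numeral
          less_irrefl of_real_eq_0_iff)
    then have "(of_nat (Suc (w - x)) * (of_nat n - 2 * of_nat x - of_nat (w - x)) :: complex) \<noteq> 0"
      using of_nat_neq_0 mult_eq_0_iff by metis
    then show ?thesis
      using qlower_qraise_power_primitive[of "k x" n x "w - x"] k x unfolding c_def by simp
  qed
  then show ?thesis by (simp add: qlinear_lincomb[OF qlinear_qlower])
qed

lemma weight_space_primitive_decomposition:
  assumes "2 * w \<le> n" "v \<in> weight_space n w"
  shows "\<exists>k. (\<forall>x\<le>w. k x \<in> weight_space n x \<and> qlower n (k x) = qzero)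
    \<and> v = (\<lambda>S. \<Sum>x\<le>w. (qraise n ^^ (w - x)) (k x) S)"
  using assms
proof (induction w arbitrary: v)
  case 0
  then have "qlower n v = qzero" using qlower_weight_zero by blast
  then show ?case using 0 by (intro exI[of _ "\<lambda>_. v"]) auto
next
  case (Suc w)
  have "qlower n v \<in> weight_space n w" using qlower_weight_space[OF Suc.prems(2)] by simp
  then obtain k where k: "\<forall>x\<le>w. k x \<in> weight_space n x \<and> qlower n (k x) = qzero"
    and Lv: "qlower n v = (\<lambda>S. \<Sum>x\<le>w. (qraise n ^^ (w - x)) (k x) S)"
    using Suc.IH Suc.prems(1) by fastforce
  define c :: "nat \<Rightarrow> complex"
    where "c x = 1 / (of_nat (Suc (w - x)) * (of_nat n - 2 * of_nat x - of_nat (w - x)))" for x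
  define u where "u = (\<lambda>S. \<Sum>x\<le>w. c x * (qraise n ^^ Suc (w - x)) (k x) S)"
  define k' where "k' x = (if x \<le> w then qscale (c x) (k x) else qdiff v u)" for x
  have "(qraise n ^^ Suc (w - x)) (k x) \<in> weight_space n (Suc w)" if "x \<le> w" for x
    using qraise_power_weight_space[of "k x" n x "Suc (w - x)"] k that by simp
  then have u: "u \<in> weight_space n (Suc w)"
    unfolding u_def by (intro qsubspace_lincomb[OF qsubspace_weight_space]) simp_all
  have "qlower n u = qlower n v"
    unfolding Lv u_def c_def using qlower_qraise_primitive_lincomb[OF k Suc.prems(1)] by simp
  then have "qlower n (qdiff v u) = qzero"
    by (simp add: qlinear_diff[OF qlinear_qlower]) (simp add: qdiff_def qzero_def)
  moreover have "qdiff v u \<in> weight_space n (Suc w)"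
    by (rule qsubspace_diff[OF qsubspace_weight_space Suc.prems(2) u])
  ultimately have "\<forall>x\<le>Suc w. k' x \<in> weight_space n x \<and> qlower n (k' x) = qzero"
    using k unfolding k'_def
    by (auto simp: le_Suc_eq qsubspace_scale[OF qsubspace_weight_space] qlinear_scale[OF qlinear_qlower])
       (simp_all add: qscale_def qzero_def)
  moreover have "(qraise n ^^ (Suc w - x)) (k' x) S = c x * (qraise n ^^ Suc (w - x)) (k x) S"
    if "x \<le> w" for x S
    using that unfolding k'_def
    by (simp add: Suc_diff_le qlinear_scale[OF qlinear_funpow[OF qlinear_qraise]] del: funpow.simps)
       (simp add: qscale_def)
  then have "v = (\<lambda>S. \<Sum>x\<le>Suc w. (qraise n ^^ (Suc w - x)) (k' x) S)"
    by (simp add: k'_def u_def qdiff_def fun_eq_iff)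
  ultimately show ?case by blast
qed
section \<open>Polytabloids and Specht modules\<close>

definition column_transversal :: "(nat \<times> nat) list \<Rightarrow> nat set \<Rightarrow> bool" where
  "column_transversal ps T \<longleftrightarrow> (\<forall>(a,b)\<in>set ps. (a \<in> T \<longleftrightarrow> b \<notin> T))"

lemma polytabloid_eq:
  "polytabloid ps T
    = (if T \<subseteq> pair_set ps \<and> column_transversal ps T then (-1) ^ card (set (map fst ps) \<inter> T) else 0)"
  by (simp add: polytabloid_def column_transversal_def)

lemma pair_set_cons: "pair_set ((a,b) # ps) = insert a (insert b (pair_set ps))"
  by (auto simp: pair_set_def)

lemma pair_set_app: "pair_set (ps @ [(a,b)]) = insert a (insert b (pair_set ps))"
  by (auto simp: pair_set_def)

lemma pair_set_mem: "(a,b) \<in> set ps \<Longrightarrow> a \<in> pair_set ps \<and> b \<in> pair_set ps"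
  by (force simp: pair_set_def)

lemma finite_pair_set: "finite (pair_set ps)"
  by (simp add: pair_set_def)

lemma distinct_columnsD:
  assumes "distinct (map fst ps @ map snd ps)" "(a,b) \<in> set ps"
  shows "a \<noteq> b" "a \<notin> snd ` set ps" "b \<notin> fst ` set ps"
    "\<And>a' b'. (a',b') \<in> set ps \<Longrightarrow> (a',b') \<noteq> (a,b) \<Longrightarrow> a' \<noteq> a \<and> a' \<noteq> b \<and> b' \<noteq> a \<and> b' \<noteq> b"
proof -
  have d: "distinct (map fst ps)" "distinct (map snd ps)" "fst ` set ps \<inter> snd ` set ps = {}"
    using assms(1) by auto
  have i1: "inj_on fst (set ps)" "inj_on snd (set ps)" using d(1,2) distinct_map by auto
  show "a \<notin> snd ` set ps" using d(3) assms(2) by force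
  show "b \<notin> fst ` set ps" using d(3) assms(2) by force
  then show "a \<noteq> b" using assms(2) by force
  fix a' b' assume p: "(a',b') \<in> set ps" "(a',b') \<noteq> (a,b)"
  have "a' \<noteq> a" using i1(1) p assms(2) by (metis fst_conv inj_on_eq_iff)
  moreover have "b' \<noteq> b" using i1(2) p assms(2) by (metis snd_conv inj_on_eq_iff)
  moreover have "a' \<noteq> b" using d(3) p(1) assms(2) by force
  moreover have "b' \<noteq> a" using d(3) p(1) assms(2) by force
  ultimately show "a' \<noteq> a \<and> a' \<noteq> b \<and> b' \<noteq> a \<and> b' \<noteq> b" by blast
qed

lemma card_column_transversal:
  assumes "distinct (map fst ps @ map snd ps)" "T \<subseteq> pair_set ps" "column_transversal ps T"
  shows "card T = length ps"
  using assms
proof (induction ps arbitrary: T)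
  case Nil then show ?case by (simp add: pair_set_def)
next
  case (Cons p ps)
  obtain a b where p: "p = (a,b)" by fastforce
  have dd: "distinct (map fst ps @ map snd ps)" using Cons.prems(1) by auto
  have ab: "a \<notin> pair_set ps" "b \<notin> pair_set ps" "a \<noteq> b"
    using Cons.prems(1) p by (auto simp: pair_set_def)
  define T' where "T' = T - {a, b}"
  have T'sub: "T' \<subseteq> pair_set ps" using Cons.prems(2) p unfolding T'_def by (auto simp: pair_set_cons)
  have "column_transversal ps T'"
    unfolding column_transversal_def
  proof (intro ballI, clarify)
    fix a' b' assume ab': "(a',b') \<in> set ps"
    then have "a' \<noteq> a \<and> a' \<noteq> b \<and> b' \<noteq> a \<and> b' \<noteq> b" using ab pair_set_mem by blast
    moreover have "a' \<in> T \<longleftrightarrow> b' \<notin> T" using Cons.prems(3) ab' unfolding column_transversal_def by auto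
    ultimately show "(a' \<in> T') = (b' \<notin> T')" unfolding T'_def by auto
  qed
  then have cT': "card T' = length ps" using Cons.IH[OF dd T'sub] by simp
  have ft: "finite T'" using T'sub finite_pair_set finite_subset by blast
  have ex: "a \<in> T \<longleftrightarrow> b \<notin> T" using Cons.prems(3) p unfolding column_transversal_def by auto
  have "T = insert a T' \<or> T = insert b T'" using ex unfolding T'_def by auto
  moreover have "a \<notin> T'" "b \<notin> T'" unfolding T'_def by auto
  ultimately have "card T = Suc (card T')" using ft by (metis card_insert_disjoint)
  then show ?case using cT' by simp
qed

lemma polytabloid_weight_space:
  assumes "ps \<in> tableau_cols n x"
  shows "polytabloid ps \<in> weight_space n x"
  unfolding weight_space_def qspace_def
proof (intro CollectI conjI allI impI)
  have t: "length ps = x" "distinct (map fst ps @ map snd ps)" "pair_set ps \<subseteq> {..<n}"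
    using assms by (auto simp: tableau_cols_def)
  fix S assume "\<not> S \<subseteq> {..<n}"
  then show "polytabloid ps S = 0" using t(3) unfolding polytabloid_eq by auto
next
  have t: "length ps = x" "distinct (map fst ps @ map snd ps)" "pair_set ps \<subseteq> {..<n}"
    using assms by (auto simp: tableau_cols_def)
  fix S :: "nat set" assume "card S \<noteq> x"
  then show "polytabloid ps S = 0"
    using card_column_transversal[OF t(2)] t(1) unfolding polytabloid_eq by auto
qed

lemma polytabloid_swap:
  assumes d: "distinct (map fst ps @ map snd ps)" and ab: "(a,b) \<in> set ps" and S: "a \<notin> S" "b \<notin> S"
  shows "polytabloid ps (insert a S) = - polytabloid ps (insert b S)"
proof -
  note dc = distinct_columnsD[OF d ab]
  have ps: "a \<in> pair_set ps" "b \<in> pair_set ps" using pair_set_mem[OF ab] by auto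
  have sub: "insert a S \<subseteq> pair_set ps \<longleftrightarrow> insert b S \<subseteq> pair_set ps" using ps by auto
  have cl: "column_transversal ps (insert a S) \<longleftrightarrow> column_transversal ps (insert b S)"
    unfolding column_transversal_def
  proof (intro iffI ballI; clarify)
    fix a' b' assume h: "\<forall>(a', b')\<in>set ps. (a' \<in> insert a S) = (b' \<notin> insert a S)" and p: "(a',b') \<in> set ps"
    show "(a' \<in> insert b S) = (b' \<notin> insert b S)"
    proof (cases "(a',b') = (a,b)")
      case True then show ?thesis using dc(1) S by auto
    next
      case False
      then have "a' \<noteq> a \<and> a' \<noteq> b \<and> b' \<noteq> a \<and> b' \<noteq> b" using dc(4) p by blast
      then show ?thesis using h p by auto
    qed
  next
    fix a' b' assume h: "\<forall>(a', b')\<in>set ps. (a' \<in> insert b S) = (b' \<notin> insert b S)" and p: "(a',b') \<in> set ps"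
    show "(a' \<in> insert a S) = (b' \<notin> insert a S)"
    proof (cases "(a',b') = (a,b)")
      case True then show ?thesis using dc(1) S by auto
    next
      case False
      then have "a' \<noteq> a \<and> a' \<noteq> b \<and> b' \<noteq> a \<and> b' \<noteq> b" using dc(4) p by blast
      then show ?thesis using h p by auto
    qed
  qed
  have fa: "a \<in> set (map fst ps)" using ab by force
  have fb: "b \<notin> set (map fst ps)" using dc(3) by simp
  have c1: "set (map fst ps) \<inter> insert a S = insert a (set (map fst ps) \<inter> S)" using fa by auto
  have c2: "set (map fst ps) \<inter> insert b S = set (map fst ps) \<inter> S" using fb by auto
  have "card (set (map fst ps) \<inter> insert a S) = Suc (card (set (map fst ps) \<inter> S))"
    unfolding c1 using S by (subst card_insert_disjoint) auto
  then show ?thesis unfolding polytabloid_eq using sub cl c2 by simp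
qed

lemma polytabloid_column_eq_0:
  assumes "(a,b) \<in> set ps" "a \<in> T" "b \<in> T"
  shows "polytabloid ps T = 0"
  using assms unfolding polytabloid_eq column_transversal_def by auto

lemma sum_involution_neg_eq_0:
  fixes f :: "'a \<Rightarrow> 'b::{idom, ring_char_0}"
  assumes "finite A" "\<And>i. i \<in> A \<Longrightarrow> h i \<in> A \<and> h (h i) = i \<and> f (h i) = - f i"
  shows "sum f A = 0"
proof -
  have "sum f A = sum (\<lambda>i. f (h i)) A"
    by (rule sum.reindex_bij_witness[where i = h and j = h]) (use assms(2) in auto)
  also have "\<dots> = - sum f A" using assms(2) by (simp add: sum_negf)
  finally show ?thesis by simp
qed

definition column_partner :: "(nat \<times> nat) list \<Rightarrow> nat \<Rightarrow> nat" where
  "column_partner ps i = (case map_of ps i of Some b \<Rightarrow> b | None \<Rightarrow>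
      (case map_of (map prod.swap ps) i of Some a \<Rightarrow> a | None \<Rightarrow> i))"

lemma column_partner_pair:
  assumes d: "distinct (map fst ps @ map snd ps)" and ab: "(a,b) \<in> set ps"
  shows "column_partner ps a = b" "column_partner ps b = a"
proof -
  have d1: "distinct (map fst ps)" using d by simp
  have d2: "distinct (map fst (map prod.swap ps))" using d by (simp add: comp_def)
  show "column_partner ps a = b" unfolding column_partner_def using map_of_is_SomeI[OF d1 ab] by simp
  have "b \<notin> fst ` set ps" using distinct_columnsD(3)[OF d ab] .
  then have "map_of ps b = None" by (simp add: map_of_eq_None_iff)
  moreover have "(b,a) \<in> set (map prod.swap ps)" using ab by force
  ultimately show "column_partner ps b = a" unfolding column_partner_def
    using map_of_is_SomeI[OF d2] by simp
qed

lemma column_partner_outside: "i \<notin> pair_set ps \<Longrightarrow> column_partner ps i = i"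
proof -
  assume "i \<notin> pair_set ps"
  then have "i \<notin> fst ` set ps" "i \<notin> fst ` set (map prod.swap ps)" by (force simp: pair_set_def)+
  then have "map_of ps i = None" "map_of (map prod.swap ps) i = None"
    by (simp_all only: map_of_eq_None_iff not_False_eq_True)
  then show ?thesis unfolding column_partner_def by simp
qed

lemma pair_setE:
  assumes "i \<in> pair_set ps"
  obtains a b where "(a,b) \<in> set ps" "i = a \<or> i = b"
  using assms by (force simp: pair_set_def)

text \<open>Swapping i with its column partner, when the partner is not in S, pairs off the terms of
  (L e_t)(S) with opposite signs.\<close>

definition column_swap :: "(nat \<times> nat) list \<Rightarrow> nat set \<Rightarrow> nat \<Rightarrow> nat" where
  "column_swap ps S i = (if column_partner ps i \<notin> S then column_partner ps i else i)"

lemma column_swap_involution: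
  assumes t: "distinct (map fst ps @ map snd ps)" "pair_set ps \<subseteq> {..<n}" and i: "i \<in> {..<n} - S"
  shows "column_swap ps S i \<in> {..<n} - S \<and> column_swap ps S (column_swap ps S i) = i
    \<and> polytabloid ps (insert (column_swap ps S i) S) = - polytabloid ps (insert i S)"
proof (cases "i \<in> pair_set ps")
  case False
  then have "column_swap ps S i = i" unfolding column_swap_def by (simp add: column_partner_outside)
  moreover have "polytabloid ps (insert i S) = 0" using False unfolding polytabloid_eq by auto
  ultimately show ?thesis using i by simp
next
  case True
  then obtain a b where ab: "(a,b) \<in> set ps" "i = a \<or> i = b" by (rule pair_setE)
  note pp = column_partner_pair[OF t(1) ab(1)]
  have abn: "a \<in> {..<n}" "b \<in> {..<n}" using pair_set_mem[OF ab(1)] t(2) by auto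
  show ?thesis
  proof (cases "column_partner ps i \<in> S")
    case True
    then have "column_swap ps S i = i" unfolding column_swap_def by simp
    moreover have "polytabloid ps (insert i S) = 0"
      using ab True pp by (intro polytabloid_column_eq_0[OF ab(1)]) auto
    ultimately show ?thesis using i by simp
  next
    case False
    then have "column_swap ps S a = b \<and> column_swap ps S b = a"
      using ab(2) pp i unfolding column_swap_def by auto
    then show ?thesis using ab(2) polytabloid_swap[OF t(1) ab(1)] i False pp abn by auto
  qed
qed

lemma qlower_polytabloid:
  assumes "ps \<in> tableau_cols n x"
  shows "qlower n (polytabloid ps) = qzero"
proof
  fix S
  have t: "distinct (map fst ps @ map snd ps)" "pair_set ps \<subseteq> {..<n}"
    using assms by (auto simp: tableau_cols_def)
  have "(\<Sum>i\<in>{..<n} - S. polytabloid ps (insert i S)) = 0"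
  proof (rule sum_involution_neg_eq_0[where h = "column_swap ps S"])
    fix i assume "i \<in> {..<n} - S"
    from column_swap_involution[OF t this]
    show "column_swap ps S i \<in> {..<n} - S \<and> column_swap ps S (column_swap ps S i) = i
      \<and> polytabloid ps (insert (column_swap ps S i) S) = - polytabloid ps (insert i S)" .
  qed simp
  then show "qlower n (polytabloid ps) S = qzero S" by (simp add: qlower_def qzero_def)
qed

lemma perm_act_vimage: "bij \<sigma> \<Longrightarrow> perm_act \<sigma> v T = v (\<sigma> -` T)"
  by (simp add: perm_act_def bij_vimage_eq_inv_image)

lemma bij_vimage_subset_iff: assumes "bij \<sigma>" shows "\<sigma> -` T \<subseteq> P \<longleftrightarrow> T \<subseteq> \<sigma> ` P"
proof
  have e1: "\<sigma> ` (\<sigma> -` T) = T" using assms by (simp add: bij_is_surj surj_image_vimage_eq)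
  have e2: "\<sigma> -` (\<sigma> ` P) = P" using assms by (simp add: bij_is_inj inj_vimage_image_eq)
  show "\<sigma> -` T \<subseteq> P \<Longrightarrow> T \<subseteq> \<sigma> ` P" using e1 by (metis image_mono)
  show "T \<subseteq> \<sigma> ` P \<Longrightarrow> \<sigma> -` T \<subseteq> P" using e2 by (metis vimage_mono)
qed

lemma tableau_cols_perm_act:
  assumes s: "\<sigma> permutes {..<n}" and ps: "ps \<in> tableau_cols n x"
  shows "map (map_prod \<sigma> \<sigma>) ps \<in> tableau_cols n x"
    and "perm_act \<sigma> (polytabloid ps) = polytabloid (map (map_prod \<sigma> \<sigma>) ps)"
proof -
  have b: "bij \<sigma>" using s permutes_bij by blast
  have inj: "inj \<sigma>" using b bij_is_inj by blast
  have t: "length ps = x" "distinct (map fst ps @ map snd ps)" "pair_set ps \<subseteq> {..<n}"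
    using ps by (auto simp: tableau_cols_def)
  define ps' where "ps' = map (map_prod \<sigma> \<sigma>) ps"
  have ps1: "map fst ps' = map \<sigma> (map fst ps)" "map snd ps' = map \<sigma> (map snd ps)"
    unfolding ps'_def by (induction ps) auto
  have pset: "pair_set ps' = \<sigma> ` pair_set ps" unfolding pair_set_def ps1 by auto
  show "ps' \<in> tableau_cols n x" unfolding tableau_cols_def
  proof (intro CollectI conjI)
    show "length ps' = x" using t(1) unfolding ps'_def by simp
    have "map fst ps' @ map snd ps' = map \<sigma> (map fst ps @ map snd ps)" unfolding ps1 by simp
    moreover have "distinct (map \<sigma> (map fst ps @ map snd ps))"
      using distinct_map[of \<sigma> "map fst ps @ map snd ps"] t(2) inj_on_subset[OF inj subset_UNIV] by blast
    ultimately show "distinct (map fst ps' @ map snd ps')" by simp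
    show "pair_set ps' \<subseteq> {..<n}" unfolding pset using t(3) permutes_image[OF s] by blast
  qed
  show "perm_act \<sigma> (polytabloid ps) = polytabloid ps'"
  proof
    fix T
    have "perm_act \<sigma> (polytabloid ps) T = polytabloid ps (\<sigma> -` T)" by (rule perm_act_vimage[OF b])
    moreover have "\<sigma> -` T \<subseteq> pair_set ps \<longleftrightarrow> T \<subseteq> pair_set ps'"
      unfolding pset by (rule bij_vimage_subset_iff[OF b])
    moreover have "column_transversal ps (\<sigma> -` T) \<longleftrightarrow> column_transversal ps' T"
      unfolding column_transversal_def ps'_def by (simp add: split_def)
    moreover have "card (set (map fst ps) \<inter> \<sigma> -` T) = card (set (map fst ps') \<inter> T)"
    proof -
      have "\<sigma> ` (set (map fst ps) \<inter> \<sigma> -` T) = set (map fst ps') \<inter> T" unfolding ps1 by auto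
      moreover have "card (\<sigma> ` (set (map fst ps) \<inter> \<sigma> -` T)) = card (set (map fst ps) \<inter> \<sigma> -` T)"
        by (rule card_image[OF inj_on_subset[OF inj]]) simp
      ultimately show ?thesis by simp
    qed
    ultimately show "perm_act \<sigma> (polytabloid ps) T = polytabloid ps' T" unfolding polytabloid_eq by simp
  qed
qed

lemma qsubspace_specht: "qsubspace (specht n x)" unfolding specht_def by (rule qsubspace_qspan)

lemma specht_subset_primitive: "specht n x \<subseteq> weight_space n x \<inter> {v. qlower n v = qzero}"
  unfolding specht_def
  by (rule qspan_minimal[OF qsubspace_Int[OF qsubspace_weight_space qsubspace_kernel[OF qlinear_qlower]]]) (auto intro: polytabloid_weight_space qlower_polytabloid)

lemma specht_weight_space: "u \<in> specht n x \<Longrightarrow> u \<in> weight_space n x" using specht_subset_primitive by blast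
lemma qlower_specht: "u \<in> specht n x \<Longrightarrow> qlower n u = qzero" using specht_subset_primitive by blast
lemma specht_qspace: "u \<in> specht n x \<Longrightarrow> u \<in> qspace n"
  using specht_weight_space weight_space_qspace by blast

lemma specht_perm_act:
  assumes "\<sigma> permutes {..<n}" "u \<in> specht n x"
  shows "perm_act \<sigma> u \<in> specht n x"
  using assms(2) unfolding specht_def
  by (rule qlinear_qspan[OF qlinear_perm_act, rotated]) (use tableau_cols_perm_act[OF assms(1)] in \<open>auto intro: qspan_superset\<close>)

lemma specht_mono_Suc: "specht n x \<subseteq> specht (Suc n) x"
  unfolding specht_def by (rule qspan_mono, rule image_mono) (auto simp: tableau_cols_def)

lemma weight_zero_specht: assumes "v \<in> weight_space n 0" shows "v \<in> specht n 0"
proof -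
  have "[] \<in> tableau_cols n 0" by (simp add: tableau_cols_def pair_set_def)
  then have p: "polytabloid [] \<in> specht n 0" unfolding specht_def by (auto intro: qspan_superset)
  have v: "v = qscale (v {}) (polytabloid [])"
  proof
    fix S
    show "v S = qscale (v {}) (polytabloid []) S"
    proof (cases "S = {}")
      case True then show ?thesis
        by (simp add: qscale_def polytabloid_eq pair_set_def column_transversal_def)
    next
      case False
      have "v S = 0"
      proof (cases "S \<subseteq> {..<n}")
        case True
        then have "finite S" by (rule finite_subset_lessThan)
        then have "card S \<noteq> 0" using False by simp
        then show ?thesis using weight_spaceD[OF assms] by blast
      qed (use assms weight_spaceD_outside in blast)
      then show ?thesis using False by (simp add: qscale_def polytabloid_eq pair_set_def)
    qed
  qed
  show ?thesis by (subst v) (rule qsubspace_scale[OF qsubspace_specht p])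
qed

lemma polytabloid_append_column:
  assumes ps: "ps \<in> tableau_cols n x" and a: "a < n" "a \<notin> pair_set ps"
  shows "ps @ [(a, n)] \<in> tableau_cols (Suc n) (Suc x)"
    and "\<And>S. S \<subseteq> {..<n} \<Longrightarrow> polytabloid (ps @ [(a, n)]) (insert n S) = polytabloid ps S"
proof -
  have t: "length ps = x" "distinct (map fst ps @ map snd ps)" "pair_set ps \<subseteq> {..<n}"
    using ps by (auto simp: tableau_cols_def)
  have nn: "n \<notin> pair_set ps" using t(3) by auto
  have fa: "a \<notin> set (map fst ps)" "a \<notin> set (map snd ps)" "n \<notin> set (map fst ps)" "n \<notin> set (map snd ps)"
    using a(2) nn by (auto simp: pair_set_def)
  show "ps @ [(a, n)] \<in> tableau_cols (Suc n) (Suc x)"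
    unfolding tableau_cols_def using t fa a(1) by (auto simp: pair_set_app)
  fix S assume S: "S \<subseteq> {..<n}"
  have nS: "n \<notin> S" using S by auto
  have e1: "insert n S \<subseteq> pair_set (ps @ [(a, n)]) \<and> column_transversal (ps @ [(a, n)]) (insert n S)
      \<longleftrightarrow> S \<subseteq> pair_set ps \<and> column_transversal ps S"
  proof -
    have "column_transversal (ps @ [(a, n)]) (insert n S) \<longleftrightarrow> a \<notin> S \<and> column_transversal ps S"
    proof -
      have "(\<forall>(a', b')\<in>set ps. (a' \<in> insert n S) = (b' \<notin> insert n S)) \<longleftrightarrow> column_transversal ps S"
        unfolding column_transversal_def using nn by (force dest: pair_set_mem)
      moreover have "a \<noteq> n" using a(1) by simp
      ultimately show ?thesis unfolding column_transversal_def by auto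
    qed
    then show ?thesis using nS a(2) by (auto simp: pair_set_app)
  qed
  have e2: "set (map fst (ps @ [(a, n)])) \<inter> insert n S = set (map fst ps) \<inter> S" if "a \<notin> S"
    using that fa nS a(1) by auto
  show "polytabloid (ps @ [(a, n)]) (insert n S) = polytabloid ps S"
  proof (cases "S \<subseteq> pair_set ps \<and> column_transversal ps S")
    case True
    then have "a \<notin> S" using a(2) by auto
    have c1: "insert n S \<subseteq> pair_set (ps @ [(a, n)]) \<and> column_transversal (ps @ [(a, n)]) (insert n S)"
      using e1 True by blast
    show ?thesis unfolding polytabloid_eq by (simp only: if_P[OF c1] if_P[OF True] e2[OF \<open>a \<notin> S\<close>])
  next
    case False
    have c1: "\<not> (insert n S \<subseteq> pair_set (ps @ [(a, n)]) \<and> column_transversal (ps @ [(a, n)]) (insert n S))"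
      using e1 False by blast
    show ?thesis unfolding polytabloid_eq by (simp only: if_not_P[OF c1] if_not_P[OF False])
  qed
qed


lemma card_pair_set: "card (pair_set ps) \<le> 2 * length ps"
proof -
  have "card (pair_set ps) \<le> length (map fst ps @ map snd ps)"
    unfolding pair_set_def by (metis card_length set_append)
  then show ?thesis by simp
qed

lemma qsubspace_image:
  assumes f: "qlinear f" and W: "qsubspace W"
  shows "qsubspace (f ` W)"
  unfolding qsubspace_def
proof (intro conjI ballI allI)
  show "qzero \<in> f ` W"
    by (rule image_eqI[where x = qzero]) (simp_all add: qlinear_zero[OF f] qsubspace_zero[OF W])
next
  fix u v assume "u \<in> f ` W" "v \<in> f ` W"
  then obtain u' v' where uv: "u' \<in> W" "v' \<in> W" "u = f u'" "v = f v'" by blast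
  show "qadd u v \<in> f ` W"
    by (rule image_eqI[where x = "qadd u' v'"]) (simp_all add: uv qlinear_add[OF f] qsubspace_add[OF W])
next
  fix u c assume "u \<in> f ` W"
  then obtain u' where u: "u' \<in> W" "u = f u'" by blast
  show "qscale c u \<in> f ` W"
    by (rule image_eqI[where x = "qscale c u'"]) (simp_all add: u qlinear_scale[OF f] qsubspace_scale[OF W])
qed

definition qslice_last :: "nat \<Rightarrow> qvec \<Rightarrow> qvec" where
  "qslice_last n v = (\<lambda>S. if S \<subseteq> {..<n} then v (insert n S) else 0)"

lemma qlinear_qslice_last: "qlinear (qslice_last n)"
  by (simp add: qlinear_def qslice_last_def qadd_def qscale_def fun_eq_iff)

lemma qslice_last_weight_space:
  assumes "v \<in> weight_space (Suc n) (Suc x)"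
  shows "qslice_last n v \<in> weight_space n x"
  unfolding weight_space_def qspace_def
proof (intro CollectI conjI allI impI)
  fix S :: "nat set" assume c: "card S \<noteq> x"
  show "qslice_last n v S = 0"
  proof (cases "S \<subseteq> {..<n}")
    case True
    then have "finite S" "n \<notin> S" using finite_subset_lessThan by auto
    then have "card (insert n S) \<noteq> Suc x" using c by simp
    then show ?thesis using weight_spaceD[OF assms] by (simp add: qslice_last_def)
  qed (simp add: qslice_last_def)
qed (simp add: qslice_last_def)

lemma qslice_last_qlower: "qslice_last n (qlower (Suc n) v) = qlower n (qslice_last n v)"
proof
  fix S
  show "qslice_last n (qlower (Suc n) v) S = qlower n (qslice_last n v) S"
  proof (cases "S \<subseteq> {..<n}")
    case True
    then have "{..<Suc n} - insert n S = {..<n} - S" "insert n S \<subseteq> {..<Suc n}" by auto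
    then show ?thesis using True by (simp add: qlower_def qslice_last_def insert_commute)
  qed (simp add: qlower_def qslice_last_def)
qed

lemma qlower_Suc_apply:
  assumes "S \<subseteq> {..<n}"
  shows "qlower (Suc n) u S = qslice_last n u S + qlower n u S"
proof -
  have "{..<Suc n} - S = insert n ({..<n} - S)" "S \<subseteq> {..<Suc n}" using assms by auto
  then show ?thesis using assms by (simp add: qlower_def qslice_last_def)
qed

lemma qslice_last_eq_0_weight_space:
  assumes u: "u \<in> weight_space (Suc n) x" and "qslice_last n u = qzero"
  shows "u \<in> weight_space n x"
  unfolding weight_space_def qspace_def
proof (intro CollectI conjI allI impI)
  fix S assume S: "\<not> S \<subseteq> {..<n}"
  show "u S = 0"
  proof (cases "S \<subseteq> {..<Suc n}")
    case True
    then have "n \<in> S" "S - {n} \<subseteq> {..<n}" using S by (auto simp: subset_iff less_Suc_eq)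
    then have "u S = qslice_last n u (S - {n})" by (simp add: qslice_last_def insert_absorb)
    then show ?thesis using assms(2) by (simp add: qzero_def)
  qed (use u weight_spaceD_outside in blast)
qed (use u weight_spaceD in blast)

lemma qslice_last_eq_0_qlower:
  assumes "qslice_last n u = qzero" "qlower (Suc n) u = qzero"
  shows "qlower n u = qzero"
proof
  fix S
  show "qlower n u S = qzero S"
  proof (cases "S \<subseteq> {..<n}")
    case True
    then show ?thesis using qlower_Suc_apply[OF True, of u] assms by (simp add: qzero_def)
  qed (simp add: qlower_def qzero_def)
qed

text \<open>Adding the column (a, n) lifts a polytabloid of S^(n-x,x) to one of S^(n+1-(x+1),x+1),
  which is possible as long as some a < n lies outside the columns, i.e. 2x < n.\<close>

lemma specht_qslice_last:
  assumes "2 * x < n"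
  shows "specht n x \<subseteq> qslice_last n ` specht (Suc n) (Suc x)"
  unfolding specht_def
proof (rule qspan_minimal)
  show "qsubspace (qslice_last n ` qspan (polytabloid ` tableau_cols (Suc n) (Suc x)))"
    by (rule qsubspace_image[OF qlinear_qslice_last qsubspace_qspan])
  show "polytabloid ` tableau_cols n x
      \<subseteq> qslice_last n ` qspan (polytabloid ` tableau_cols (Suc n) (Suc x))"
  proof clarify
    fix ps assume ps: "ps \<in> tableau_cols n x"
    have "card (pair_set ps) < n" using card_pair_set[of ps] ps assms by (simp add: tableau_cols_def)
    then have "\<not> {..<n} \<subseteq> pair_set ps" by (metis card_lessThan card_mono not_le finite_pair_set)
    then obtain a where a: "a < n" "a \<notin> pair_set ps" by auto
    have lift: "qslice_last n (polytabloid (ps @ [(a, n)])) = polytabloid ps"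
      using polytabloid_append_column(2)[OF ps a] weight_spaceD_outside[OF polytabloid_weight_space[OF ps]]
      by (auto simp: qslice_last_def)
    have "polytabloid (ps @ [(a, n)]) \<in> qspan (polytabloid ` tableau_cols (Suc n) (Suc x))"
      using polytabloid_append_column(1)[OF ps a] by (auto intro: qspan_superset)
    then show "polytabloid ps \<in> qslice_last n ` qspan (polytabloid ` tableau_cols (Suc n) (Suc x))"
      unfolding lift[symmetric] by (rule imageI)
  qed
qed

text \<open>Conversely, every primitive vector of weight x \<le> n/2 lies in S^(n-x,x): subtracting a lift of
  its slice leaves a primitive vector supported on {..<n}.\<close>

lemma primitive_specht:
  "v \<in> weight_space n x \<Longrightarrow> qlower n v = qzero \<Longrightarrow> 2 * x \<le> n \<Longrightarrow> v \<in> specht n x"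
proof (induction n arbitrary: x v)
  case 0
  then show ?case using weight_zero_specht by simp
next
  case (Suc n)
  show ?case
  proof (cases x)
    case 0
    then show ?thesis using weight_zero_specht Suc.prems by simp
  next
    case (Suc x')
    have "qslice_last n v \<in> specht n x'"
      using Suc.IH[OF qslice_last_weight_space] Suc.prems qslice_last_qlower[of n v]
        qlinear_zero[OF qlinear_qslice_last] by (simp add: Suc)
    then obtain w where w: "w \<in> specht (Suc n) x" "qslice_last n w = qslice_last n v"
      using specht_qslice_last[of x' n] Suc.prems(3) by (auto simp: Suc)
    define u where "u = qdiff v w"
    have u: "u \<in> weight_space (Suc n) x" "qlower (Suc n) u = qzero" "qslice_last n u = qzero"
      using qsubspace_diff[OF qsubspace_weight_space Suc.prems(1) specht_weight_space[OF w(1)]]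
        Suc.prems(2) qlower_specht[OF w(1)] w(2)
      by (simp_all add: u_def qlinear_diff[OF qlinear_qlower] qlinear_diff[OF qlinear_qslice_last])
         (simp_all add: qdiff_def qzero_def)
    have "u \<in> specht (Suc n) x"
    proof (cases "2 * x \<le> n")
      case True
      then show ?thesis
        using Suc.IH[OF qslice_last_eq_0_weight_space qslice_last_eq_0_qlower] u specht_mono_Suc by blast
    next
      case False
      then have "u = qzero"
        using primitive_above_half_eq_0[OF qslice_last_eq_0_weight_space qslice_last_eq_0_qlower] u
        by simp
      then show ?thesis using qsubspace_zero[OF qsubspace_specht] by simp
    qed
    moreover have "v = qadd u w" unfolding u_def by (simp add: qadd_def qdiff_def)
    ultimately show ?thesis using qsubspace_add[OF qsubspace_specht _ w(1)] by simp
  qed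
qed

section \<open>Isotypic decomposition of weight vectors\<close>

definition qflip :: "nat \<Rightarrow> qvec \<Rightarrow> qvec" where
  "qflip n v = (\<lambda>S. if S \<subseteq> {..<n} then v ({..<n} - S) else 0)"

lemma qlinear_qflip: "qlinear (qflip n)"
  by (simp add: qlinear_def qflip_def qadd_def qscale_def fun_eq_iff)

lemma qflip_qspace: "qflip n v \<in> qspace n" by (simp add: qflip_def qspace_def)

lemma qflip_weight_space:
  assumes "v \<in> weight_space n w" "w \<le> n"
  shows "qflip n v \<in> weight_space n (n - w)"
  unfolding weight_space_def
proof (intro CollectI conjI allI impI qflip_qspace)
  fix S :: "nat set" assume c: "card S \<noteq> n - w"
  show "qflip n v S = 0"
  proof (cases "S \<subseteq> {..<n}")
    case True
    then have "card ({..<n} - S) = n - card S" "card S \<le> n"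
      by (simp_all add: card_Diff_subset finite_subset_lessThan card_le_of_subset_lessThan)
    then have "card ({..<n} - S) \<noteq> w" using c assms(2) by linarith
    then show ?thesis using True weight_spaceD[OF assms(1)] by (simp add: qflip_def)
  qed (simp add: qflip_def)
qed

lemma qflip_qflip:
  assumes "v \<in> qspace n"
  shows "qflip n (qflip n v) = v"
proof
  fix S
  show "qflip n (qflip n v) S = v S"
  proof (cases "S \<subseteq> {..<n}")
    case True
    then have "{..<n} - ({..<n} - S) = S" by auto
    then show ?thesis using True by (simp add: qflip_def)
  qed (use assms qspaceD in \<open>simp add: qflip_def\<close>)
qed

lemma permutes_vimage_subset_iff:
  assumes "\<sigma> permutes {..<n}"
  shows "\<sigma> -` T \<subseteq> {..<n} \<longleftrightarrow> T \<subseteq> {..<n}"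
  using bij_vimage_subset_iff[OF permutes_bij[OF assms]] permutes_image[OF assms] by simp

lemma qflip_perm_act:
  assumes s: "\<sigma> permutes {..<n}"
  shows "qflip n (perm_act \<sigma> v) = perm_act \<sigma> (qflip n v)"
proof
  fix T
  have b: "bij \<sigma>" using s permutes_bij by blast
  have "\<sigma> -` ({..<n} - T) = {..<n} - \<sigma> -` T" using permutes_vimage[OF s] by auto
  then show "qflip n (perm_act \<sigma> v) T = perm_act \<sigma> (qflip n v) T"
    unfolding qflip_def perm_act_vimage[OF b] using permutes_vimage_subset_iff[OF s] by simp
qed

lemma qraise_perm_act:
  assumes s: "\<sigma> permutes {..<n}"
  shows "qraise n (perm_act \<sigma> v) = perm_act \<sigma> (qraise n v)"
proof
  fix T
  have b: "bij \<sigma>" using s permutes_bij by blast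
  have inj: "inj \<sigma>" using b bij_is_inj by blast
  have "(\<Sum>j\<in>T. v (\<sigma> -` (T - {j}))) = (\<Sum>j\<in>\<sigma> -` T. v (\<sigma> -` T - {j}))"
  proof (rule sum.reindex_bij_witness[where i = \<sigma> and j = "inv \<sigma>"])
    fix a assume "a \<in> T" then show "\<sigma> (inv \<sigma> a) = a" using b by (meson bij_is_surj surj_f_inv_f)
  next
    fix a assume "a \<in> T" then show "inv \<sigma> a \<in> \<sigma> -` T" using b by (simp add: bij_is_surj surj_f_inv_f)
  next
    fix c assume "c \<in> \<sigma> -` T" then show "inv \<sigma> (\<sigma> c) = c" using inj by simp
  next
    fix c assume "c \<in> \<sigma> -` T" then show "\<sigma> c \<in> T" by simp
  next
    fix a assume "a \<in> T"
    have "\<sigma> (inv \<sigma> a) = a" using b by (meson bij_is_surj surj_f_inv_f)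
    then have "\<sigma> -` (T - {a}) = \<sigma> -` T - {inv \<sigma> a}" using inj by (auto simp: inj_eq)
    then show "v (\<sigma> -` T - {inv \<sigma> a}) = v (\<sigma> -` (T - {a}))" by simp
  qed
  then show "qraise n (perm_act \<sigma> v) T = perm_act \<sigma> (qraise n v) T"
    unfolding qraise_def perm_act_vimage[OF b] using permutes_vimage_subset_iff[OF s] by simp
qed

lemma qraise_power_perm_act:
  "\<sigma> permutes {..<n} \<Longrightarrow> (qraise n ^^ j) (perm_act \<sigma> v) = perm_act \<sigma> ((qraise n ^^ j) v)"
  by (induction j) (simp_all add: qraise_perm_act)

lemma qraise_power_qspace: "v \<in> qspace n \<Longrightarrow> (qraise n ^^ j) v \<in> qspace n"
  by (induction j) (simp_all add: qraise_qspace)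

lemma equivariant_mapsI:
  assumes "qlinear g" "\<And>v. v \<in> qspace n \<Longrightarrow> g v \<in> qspace n"
    "\<And>\<sigma> v. \<sigma> permutes {..<n} \<Longrightarrow> g (perm_act \<sigma> v) = perm_act \<sigma> (g v)"
  shows "g \<in> equivariant_maps n x"
  unfolding equivariant_maps_def using assms specht_qspace
  by (auto simp: qlinear_add qlinear_scale)

lemma isotypicI: "g \<in> equivariant_maps n x \<Longrightarrow> u \<in> specht n x \<Longrightarrow> g u \<in> isotypic n x"
  unfolding isotypic_def by (rule qspan_superset) blast

lemma qraise_power_isotypic: "u \<in> specht n x \<Longrightarrow> (qraise n ^^ j) u \<in> isotypic n x"
  by (rule isotypicI[OF equivariant_mapsI])
     (simp_all add: qlinear_funpow qlinear_qraise qraise_power_qspace qraise_power_perm_act)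

lemma qsubspace_isotypic: "qsubspace (isotypic n x)"
  unfolding isotypic_def by (rule qsubspace_qspan)

lemma qflip_isotypic:
  assumes "y \<in> isotypic n x"
  shows "qflip n y \<in> isotypic n x"
  using assms unfolding isotypic_def
proof (rule qlinear_qspan[OF qlinear_qflip, rotated])
  fix a assume "a \<in> (\<Union>g\<in>equivariant_maps n x. g ` specht n x)"
  then obtain g u where g: "g \<in> equivariant_maps n x" and u: "u \<in> specht n x" and a: "a = g u" by blast
  have g': "qflip n \<circ> g \<in> equivariant_maps n x"
    using g unfolding equivariant_maps_def
    by (simp add: qflip_qspace qflip_perm_act qlinear_add[OF qlinear_qflip] qlinear_scale[OF qlinear_qflip])
  have "(qflip n \<circ> g) u \<in> (\<Union>g\<in>equivariant_maps n x. g ` specht n x)"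
    by (rule UN_I[OF g' imageI[OF u]])
  then show "qflip n a \<in> qspan (\<Union>g\<in>equivariant_maps n x. g ` specht n x)"
    unfolding a using qspan_superset by simp
qed

lemma weight_space_isotypic_decomposition_low:
  assumes "2 * w \<le> n" "v \<in> weight_space n w"
  shows "\<exists>part. (\<forall>x. part x \<in> isotypic n x) \<and> v = (\<lambda>S. \<Sum>x\<le>n div 2. part x S)"
proof -
  obtain k where k: "\<forall>x\<le>w. k x \<in> weight_space n x \<and> qlower n (k x) = qzero"
    and v: "v = (\<lambda>S. \<Sum>x\<le>w. (qraise n ^^ (w - x)) (k x) S)"
    using weight_space_primitive_decomposition[OF assms] by blast
  define part where "part x = (if x \<le> w then (qraise n ^^ (w - x)) (k x) else qzero)" for x
  have "part x \<in> isotypic n x" for x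
  proof (cases "x \<le> w")
    case True
    then have "k x \<in> specht n x" using k primitive_specht assms(1) by simp
    then show ?thesis using True qraise_power_isotypic unfolding part_def by simp
  qed (simp add: part_def qsubspace_zero[OF qsubspace_isotypic])
  moreover have "(\<Sum>x\<le>w. part x S) = (\<Sum>x\<le>n div 2. part x S)" for S
    by (rule sum.mono_neutral_left) (use assms(1) in \<open>auto simp: part_def qzero_def\<close>)
  then have "v = (\<lambda>S. \<Sum>x\<le>n div 2. part x S)" unfolding v part_def by simp
  ultimately show ?thesis by blast
qed

text \<open>Weights above n/2 are reduced to the previous case by complementing the bit strings.\<close>

lemma weight_space_isotypic_decomposition:
  assumes "v \<in> weight_space n w" "w \<le> n"
  shows "\<exists>part. (\<forall>x. part x \<in> isotypic n x) \<and> v = (\<lambda>S. \<Sum>x\<le>n div 2. part x S)"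
proof (cases "2 * w \<le> n")
  case True
  then show ?thesis using weight_space_isotypic_decomposition_low assms(1) by blast
next
  case False
  then have "2 * (n - w) \<le> n" by simp
  from weight_space_isotypic_decomposition_low[OF this qflip_weight_space[OF assms]]
  obtain part where part: "\<forall>x. part x \<in> isotypic n x"
    and flip: "qflip n v = (\<lambda>S. \<Sum>x\<le>n div 2. part x S)"
    by (elim exE conjE)
  have "v = qflip n (qflip n v)" using qflip_qflip weight_space_qspace[OF assms(1)] by simp
  also have "\<dots> = (\<lambda>S. \<Sum>x\<le>n div 2. qflip n (part x) S)"
    unfolding flip by (rule qlinear_sum[OF qlinear_qflip]) simp
  finally have "v = (\<lambda>S. \<Sum>x\<le>n div 2. qflip n (part x) S)" .
  with part show ?thesis by (intro exI[of _ "\<lambda>x. qflip n (part x)"]) (simp add: qflip_isotypic)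
qed

section \<open>The sum of transpositions\<close>

text \<open>K = \<Sum>_{i\<noteq>j} (1 - (i j)) is central in the group algebra of S_n; on the isotypic
  component of (n-x,x) it acts by n(n-1) minus twice the content sum of (n-x,x), i.e. by
  2x(n-x+1).\<close>

definition offdiag :: "nat \<Rightarrow> (nat \<times> nat) set" where
  "offdiag n = Sigma {..<n} (\<lambda>i. {..<n} - {i})"

definition qcasimir :: "nat \<Rightarrow> qvec \<Rightarrow> qvec" where
  "qcasimir n v = (\<lambda>S. \<Sum>p\<in>offdiag n. v S - perm_act (transpose (fst p) (snd p)) v S)"

definition casimir_eigenvalue :: "nat \<Rightarrow> nat \<Rightarrow> real" where
  "casimir_eigenvalue n x = 2 * real x * (real n - real x + 1)"

lemma finite_offdiag: "finite (offdiag n)"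
  by (simp add: offdiag_def)

lemma qlinear_qcasimir: "qlinear (qcasimir n)"
  by (simp add: qlinear_def qcasimir_def perm_act_def qadd_def qscale_def fun_eq_iff sum.distrib
      sum_distrib_left sum_subtractf algebra_simps)

lemma perm_act_transpose: "perm_act (transpose i j) v S = v (transpose i j ` S)"
  by (simp add: perm_act_def)

lemma transpose_image:
  assumes "i \<noteq> j"
  shows "transpose i j ` S = (if i \<in> S \<and> j \<notin> S then insert j (S - {i})
    else if j \<in> S \<and> i \<notin> S then insert i (S - {j}) else S)"
proof (cases "i \<in> S \<longleftrightarrow> j \<in> S")
  case True then show ?thesis by auto
next
  case False then show ?thesis using assms
    by (intro set_eqI) (auto simp: in_transpose_image_iff transpose_def)
qed

lemma sum_transpose_image_mem:
  fixes v :: qvec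
  assumes "i \<in> S" "S \<subseteq> {..<n}"
  shows "(\<Sum>j\<in>{..<n} - {i}. v S - v (transpose i j ` S)) = (\<Sum>j\<in>{..<n} - S. v S - v (insert j (S - {i})))"
proof (rule sum.mono_neutral_cong_right)
  show "\<forall>j\<in>{..<n} - {i} - ({..<n} - S). v S - v (transpose i j ` S) = 0" using assms(1) by auto
  show "v S - v (transpose i j ` S) = v S - v (insert j (S - {i}))" if "j \<in> {..<n} - S" for j
    using that assms(1) by (subst transpose_image) auto
qed (use assms(1) in auto)

lemma sum_transpose_image_not_mem:
  fixes v :: qvec
  assumes "i \<in> {..<n} - S" "S \<subseteq> {..<n}"
  shows "(\<Sum>j\<in>{..<n} - {i}. v S - v (transpose i j ` S)) = (\<Sum>j\<in>S. v S - v (insert i (S - {j})))"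
proof (rule sum.mono_neutral_cong_right)
  show "\<forall>j\<in>{..<n} - {i} - S. v S - v (transpose i j ` S) = 0" using assms(1) by auto
  show "v S - v (transpose i j ` S) = v S - v (insert i (S - {j}))" if "j \<in> S" for j
    using that assms(1) by (subst transpose_image) auto
qed (use assms in auto)

lemma qcasimir_apply:
  assumes S: "S \<subseteq> {..<n}"
  shows "qcasimir n v S
    = 2 * (of_nat (card S) * (of_nat n - of_nat (card S) + 1) * v S - qraise n (qlower n v) S)"
proof -
  define D where "D = (\<Sum>j\<in>S. \<Sum>i\<in>{..<n} - S. v (insert i (S - {j})))"
  have f: "finite S" using S by (rule finite_subset_lessThan)
  have cS: "card ({..<n} - S) = n - card S" using S f by (simp add: card_Diff_subset)
  have "qcasimir n v S = (\<Sum>i<n. \<Sum>j\<in>{..<n} - {i}. v S - v (transpose i j ` S))"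
    unfolding qcasimir_def perm_act_transpose offdiag_def by (subst sum.Sigma) (auto simp: split_def)
  also have "\<dots> = (\<Sum>i\<in>S. \<Sum>j\<in>{..<n} - {i}. v S - v (transpose i j ` S))
      + (\<Sum>i\<in>{..<n} - S. \<Sum>j\<in>{..<n} - {i}. v S - v (transpose i j ` S))"
    by (simp add: sum.subset_diff[OF S finite_lessThan] add.commute)
  also have "\<dots> = (\<Sum>i\<in>S. \<Sum>j\<in>{..<n} - S. v S - v (insert j (S - {i})))
      + (\<Sum>i\<in>{..<n} - S. \<Sum>j\<in>S. v S - v (insert i (S - {j})))"
    using sum_transpose_image_mem[OF _ S] sum_transpose_image_not_mem[OF _ S] by simp
  also have "\<dots> = 2 * (of_nat (card S) * of_nat (n - card S) * v S - D)"
    unfolding D_def by (simp add: sum_subtractf cS sum.swap[of _ "{..<n} - S"])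
  also have "(of_nat (n - card S) :: complex) = of_nat n - of_nat (card S)"
    using S by (simp add: of_nat_diff card_le_of_subset_lessThan)
  also have "D = qraise n (qlower n v) S - of_nat (card S) * v S"
    unfolding D_def using qraise_qlower_apply[OF S] by simp
  finally show ?thesis by (simp add: algebra_simps)
qed

lemma qraise_qlower_weight_space:
  assumes "v \<in> weight_space n w" shows "qraise n (qlower n v) \<in> weight_space n w"
proof (cases w)
  case 0
  then have "qlower n v = qzero" using qlower_weight_zero assms by simp
  then show ?thesis
    using qlinear_zero[OF qlinear_qraise] qsubspace_zero[OF qsubspace_weight_space] by simp
next
  case (Suc w') then show ?thesis using qraise_weight_space[OF qlower_weight_space[OF assms]] by simp
qed

lemma transpose_image_subset_iff:
  "i < n \<Longrightarrow> j < n \<Longrightarrow> transpose i j ` S \<subseteq> {..<n} \<longleftrightarrow> S \<subseteq> {..<n}"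
  using permutes_vimage_subset_iff[OF permutes_swap_id[of i "{..<n}" j]]
  by (simp add: bij_vimage_eq_inv_image)

lemma qcasimir_weight_space:
  assumes "v \<in> weight_space n w"
  shows "qcasimir n v = (\<lambda>S. 2 * (of_nat w * (of_nat n - of_nat w + 1)) * v S - 2 * qraise n (qlower n v) S)"
proof
  fix S
  show "qcasimir n v S = 2 * (of_nat w * (of_nat n - of_nat w + 1)) * v S - 2 * qraise n (qlower n v) S"
  proof (cases "S \<subseteq> {..<n}")
    case True
    show ?thesis
    proof (cases "card S = w")
      case True then show ?thesis using qcasimir_apply[OF \<open>S \<subseteq> {..<n}\<close>] by simp
    next
      case False
      then show ?thesis
        using qcasimir_apply[OF \<open>S \<subseteq> {..<n}\<close>, of v] weight_spaceD[OF assms False]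
          weight_spaceD[OF qraise_qlower_weight_space[OF assms] False]
        by simp
    qed
  next
    case False
    have "v (transpose (fst p) (snd p) ` S) = 0" if "p \<in> offdiag n" for p
      using that False transpose_image_subset_iff[of "fst p" n "snd p" S] weight_spaceD_outside[OF assms]
      by (auto simp: offdiag_def)
    then show ?thesis
      using False weight_spaceD_outside[OF assms] by (simp add: qcasimir_def perm_act_transpose qraise_def)
  qed
qed

lemma qcasimir_specht:
  assumes "u \<in> specht n x"
  shows "qcasimir n u = qscale (of_real (casimir_eigenvalue n x)) u"
proof -
  have "qraise n (qlower n u) = qzero"
    using qlower_specht[OF assms] qlinear_zero[OF qlinear_qraise] by simp
  then show ?thesis
    using qcasimir_weight_space[OF specht_weight_space[OF assms]]
    by (simp add: qscale_def casimir_eigenvalue_def qzero_def mult.assoc)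
qed

lemma sum_Pow_transpose_image:
  assumes "i < n" "j < n"
  shows "(\<Sum>S\<in>Pow {..<n}. cnj (u S) * v (transpose i j ` S))
    = (\<Sum>S\<in>Pow {..<n}. cnj (u (transpose i j ` S)) * v S)"
  by (rule sum.reindex_bij_witness[where i = "\<lambda>S. transpose i j ` S" and j = "\<lambda>S. transpose i j ` S"])
     (use transpose_image_subset_iff[OF assms] in \<open>auto simp: image_image\<close>)

lemma qinner_qcasimir: "qinner n u (qcasimir n v) = qinner n (qcasimir n u) v"
proof -
  let ?t = "\<lambda>p. transpose (fst p) (snd p)"
  let ?uv = "\<Sum>S\<in>Pow {..<n}. cnj (u S) * v S"
  have "qinner n u (qcasimir n v) = (\<Sum>S\<in>Pow {..<n}. \<Sum>p\<in>offdiag n. cnj (u S) * (v S - v (?t p ` S)))"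
    unfolding qinner_def qcasimir_def perm_act_transpose by (simp only: sum_distrib_left)
  also have "\<dots> = (\<Sum>p\<in>offdiag n. \<Sum>S\<in>Pow {..<n}. cnj (u S) * (v S - v (?t p ` S)))" by (rule sum.swap)
  also have "\<dots> = (\<Sum>p\<in>offdiag n. ?uv - (\<Sum>S\<in>Pow {..<n}. cnj (u S) * v (?t p ` S)))"
    by (simp only: right_diff_distrib sum_subtractf)
  also have "\<dots> = (\<Sum>p\<in>offdiag n. ?uv - (\<Sum>S\<in>Pow {..<n}. cnj (u (?t p ` S)) * v S))"
    by (rule sum.cong[OF refl]) (auto simp: offdiag_def sum_Pow_transpose_image)
  also have "\<dots> = (\<Sum>p\<in>offdiag n. \<Sum>S\<in>Pow {..<n}. (cnj (u S) - cnj (u (?t p ` S))) * v S)"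
    by (simp only: left_diff_distrib sum_subtractf)
  also have "\<dots> = (\<Sum>S\<in>Pow {..<n}. \<Sum>p\<in>offdiag n. (cnj (u S) - cnj (u (?t p ` S))) * v S)"
    by (rule sum.swap)
  also have "\<dots> = qinner n (qcasimir n u) v"
    unfolding qinner_def qcasimir_def perm_act_transpose
    by (simp only: cnj_sum complex_cnj_diff sum_distrib_right)
  finally show ?thesis .
qed

lemma equivariant_maps_diff:
  assumes f: "f \<in> equivariant_maps n x" and ab: "a \<in> specht n x" "b \<in> specht n x"
  shows "f (qdiff a b) = qdiff (f a) (f b)"
proof -
  have e: "qdiff a b = qadd a (qscale (-1) b)" "qdiff (f a) (f b) = qadd (f a) (qscale (-1) (f b))"
    by (simp_all add: qdiff_def qadd_def qscale_def)
  have "qscale (-1) b \<in> specht n x" using qsubspace_scale[OF qsubspace_specht ab(2)] .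
  then show ?thesis using f ab unfolding e equivariant_maps_def by simp
qed

lemma equivariant_maps_sum:
  assumes f: "f \<in> equivariant_maps n x" and A: "finite A" "\<And>a. a \<in> A \<Longrightarrow> g a \<in> specht n x"
  shows "f (\<lambda>S. \<Sum>a\<in>A. g a S) = (\<lambda>S. \<Sum>a\<in>A. f (g a) S)"
  using A
proof (induction A rule: finite_induct)
  case empty
  have z: "qzero \<in> specht n x" by (rule qsubspace_zero[OF qsubspace_specht])
  have "f (qscale 0 qzero) = qscale 0 (f qzero)" using f z unfolding equivariant_maps_def by blast
  then show ?case by (simp add: qscale_def qzero_def)
next
  case (insert y F)
  have s: "(\<lambda>S. \<Sum>a\<in>F. g a S) \<in> specht n x"
    by (rule qsubspace_sum[OF qsubspace_specht insert(1)]) (use insert in auto)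
  have "(\<lambda>S. \<Sum>a\<in>insert y F. g a S) = qadd (g y) (\<lambda>S. \<Sum>a\<in>F. g a S)"
    using insert by (simp add: qadd_def)
  moreover have "f (qadd (g y) (\<lambda>S. \<Sum>a\<in>F. g a S)) = qadd (f (g y)) (f (\<lambda>S. \<Sum>a\<in>F. g a S))"
    using f s insert(4) unfolding equivariant_maps_def by simp
  ultimately show ?case using insert by (simp add: qadd_def)
qed

lemma qcasimir_equivariant:
  assumes f: "f \<in> equivariant_maps n x" and u: "u \<in> specht n x"
  shows "qcasimir n (f u) = qscale (of_real (casimir_eigenvalue n x)) (f u)"
proof -
  let ?t = "\<lambda>p. transpose (fst p) (snd p)"
  have tp: "?t p permutes {..<n}" if "p \<in> offdiag n" for p
    using that by (auto simp: offdiag_def intro!: permutes_swap_id)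
  have ps: "perm_act (?t p) u \<in> specht n x" if "p \<in> offdiag n" for p
    using specht_perm_act[OF tp[OF that] u] .
  have "qcasimir n (f u) = (\<lambda>S. \<Sum>p\<in>offdiag n. f (qdiff u (perm_act (?t p) u)) S)"
    unfolding qcasimir_def
  proof (rule ext, rule sum.cong[OF refl])
    fix S p assume p: "p \<in> offdiag n"
    have "perm_act (?t p) (f u) = f (perm_act (?t p) u)"
      using f u tp[OF p] unfolding equivariant_maps_def by simp
    then show "f u S - perm_act (?t p) (f u) S = f (qdiff u (perm_act (?t p) u)) S"
      using equivariant_maps_diff[OF f u ps[OF p]] by (simp add: qdiff_def)
  qed
  also have "\<dots> = f (\<lambda>S. \<Sum>p\<in>offdiag n. qdiff u (perm_act (?t p) u) S)"
    by (rule equivariant_maps_sum[OF f finite_offdiag, symmetric])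
       (use qsubspace_diff[OF qsubspace_specht u ps] in auto)
  also have "(\<lambda>S. \<Sum>p\<in>offdiag n. qdiff u (perm_act (?t p) u) S) = qcasimir n u"
    by (simp add: qcasimir_def qdiff_def)
  also have "\<dots> = qscale (of_real (casimir_eigenvalue n x)) u" by (rule qcasimir_specht[OF u])
  also have "f \<dots> = qscale (of_real (casimir_eigenvalue n x)) (f u)"
    using f u unfolding equivariant_maps_def by simp
  finally show ?thesis .
qed

lemma isotypic_eigenvector:
  assumes "y \<in> isotypic n x"
  shows "qcasimir n y = qscale (of_real (casimir_eigenvalue n x)) y \<and> y \<in> qspace n"
proof -
  let ?W = "{y. qcasimir n y = qscale (of_real (casimir_eigenvalue n x)) y \<and> y \<in> qspace n}"
  have "qsubspace ?W" unfolding qsubspace_def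
  proof (intro conjI ballI allI)
    show "qzero \<in> ?W"
      using qlinear_zero[OF qlinear_qcasimir] qsubspace_zero[OF qsubspace_qspace]
      by (simp add: qscale_def qzero_def)
  next
    fix u v assume uv: "u \<in> ?W" "v \<in> ?W"
    have "qcasimir n (qadd u v) = qadd (qcasimir n u) (qcasimir n v)"
      by (rule qlinear_add[OF qlinear_qcasimir])
    then show "qadd u v \<in> ?W" using uv qsubspace_add[OF qsubspace_qspace]
      by (simp add: qadd_def qscale_def fun_eq_iff algebra_simps)
  next
    fix u c assume u: "u \<in> ?W"
    have "qcasimir n (qscale c u) = qscale c (qcasimir n u)" by (rule qlinear_scale[OF qlinear_qcasimir])
    then show "qscale c u \<in> ?W" using u qsubspace_scale[OF qsubspace_qspace]
      by (simp add: qscale_def fun_eq_iff algebra_simps)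
  qed
  moreover have "(\<Union>f\<in>equivariant_maps n x. f ` specht n x) \<subseteq> ?W"
    using qcasimir_equivariant by (auto simp: equivariant_maps_def)
  ultimately have "isotypic n x \<subseteq> ?W" unfolding isotypic_def by (rule qspan_minimal)
  then show ?thesis using assms by blast
qed

lemma isotypic_orthogonal:
  assumes "y1 \<in> isotypic n x1" "y2 \<in> isotypic n x2" "x1 \<noteq> x2" "x1 + x2 \<le> n"
  shows "qinner n y1 y2 = 0"
proof -
  have "qinner n y1 (qcasimir n y2) = of_real (casimir_eigenvalue n x2) * qinner n y1 y2"
    using isotypic_eigenvector[OF assms(2)] by (simp add: qscale_def qinner_scale_right)
  moreover have "qinner n (qcasimir n y1) y2 = of_real (casimir_eigenvalue n x1) * qinner n y1 y2"
    using isotypic_eigenvector[OF assms(1)]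
    by (simp add: qscale_def qinner_def sum_distrib_left algebra_simps)
  ultimately have "of_real (casimir_eigenvalue n x1 - casimir_eigenvalue n x2) * qinner n y1 y2 = 0"
    using qinner_qcasimir[of n y1 y2] by (simp add: algebra_simps)
  moreover have "casimir_eigenvalue n x1 \<noteq> casimir_eigenvalue n x2"
  proof
    assume "casimir_eigenvalue n x1 = casimir_eigenvalue n x2"
    then have "(real x1 - real x2) * (real n + 1 - real x1 - real x2) = 0"
      unfolding casimir_eigenvalue_def by (simp add: algebra_simps)
    moreover have "real n + 1 - real x1 - real x2 > 0" using assms(4) by simp
    ultimately have "real x1 = real x2" by simp
    then show False using assms(3) by simp
  qed
  ultimately show ?thesis by simp
qed

section \<open>The distribution as squared norms of isotypic components\<close>

lemma orth_proj_eqI: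
  assumes W: "qsubspace W" "W \<subseteq> qspace n" and w: "w \<in> W"
    and o: "\<And>u. u \<in> W \<Longrightarrow> qinner n u (qdiff v w) = 0"
  shows "orth_proj n W v = w"
  unfolding orth_proj_def
proof (rule the_equality)
  show "w \<in> W \<and> (\<forall>u\<in>W. qinner n u (qdiff v w) = 0)" using w o by blast
next
  fix w' assume w': "w' \<in> W \<and> (\<forall>u\<in>W. qinner n u (qdiff v w') = 0)"
  define d where "d = qdiff w' w"
  have dW: "d \<in> W" unfolding d_def using qsubspace_diff[OF W(1)] w w' by blast
  have "qinner n d (qdiff v w) = 0" "qinner n d (qdiff v w') = 0" using o dW w' by auto
  moreover have "d = (\<lambda>S. qdiff v w S - qdiff v w' S)" unfolding d_def qdiff_def by auto
  ultimately have "qinner n d d = 0" using qinner_diff_right[of n d "qdiff v w" "qdiff v w'"] by simp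
  then have "qnorm_sq n d = 0" by (simp add: qinner_self_qnorm_sq)
  then have "d = qzero" using qnorm_sq_eq_0 dW W(2) by blast
  then show "w' = w" unfolding d_def by (auto simp: qdiff_def qzero_def fun_eq_iff)
qed

lemma qinner_orthogonal_sums:
  assumes A: "finite A"
    and o: "\<And>x y. x \<in> A \<Longrightarrow> y \<in> A \<Longrightarrow> x \<noteq> y \<Longrightarrow> qinner n (f x) (f y) = 0"
  shows "qinner n (\<lambda>S. \<Sum>x\<in>A. a x * f x S) (\<lambda>S. \<Sum>y\<in>A. b y * f y S)
    = (\<Sum>x\<in>A. cnj (a x) * b x * qinner n (f x) (f x))"
proof -
  have "qinner n (\<lambda>S. \<Sum>x\<in>A. a x * f x S) (\<lambda>S. \<Sum>y\<in>A. b y * f y S)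
      = (\<Sum>x\<in>A. cnj (a x) * (\<Sum>y\<in>A. b y * qinner n (f x) (f y)))"
    by (simp add: qinner_lincomb_left[OF A] qinner_lincomb_right[OF A])
  also have "\<dots> = (\<Sum>x\<in>A. cnj (a x) * (b x * qinner n (f x) (f x)))"
  proof (rule sum.cong[OF refl])
    fix x assume x: "x \<in> A"
    have "(\<Sum>y\<in>A. b y * qinner n (f x) (f y))
        = b x * qinner n (f x) (f x) + (\<Sum>y\<in>A - {x}. b y * qinner n (f x) (f y))"
      using A x by (simp add: sum.remove)
    also have "(\<Sum>y\<in>A - {x}. b y * qinner n (f x) (f y)) = 0" using o x by (intro sum.neutral) auto
    finally show "cnj (a x) * (\<Sum>y\<in>A. b y * qinner n (f x) (f y))
        = cnj (a x) * (b x * qinner n (f x) (f x))" by simp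
  qed
  finally show ?thesis by (simp add: mult.assoc)
qed

locale isotypic_decomposition =
  fixes n :: nat and v :: qvec and part :: "nat \<Rightarrow> qvec"
  assumes part_isotypic: "\<And>x. part x \<in> isotypic n x"
    and part_sum: "v = (\<lambda>S. \<Sum>x\<le>n div 2. part x S)"
begin

lemma part_orthogonal:
  "x \<le> n div 2 \<Longrightarrow> y \<le> n div 2 \<Longrightarrow> x \<noteq> y \<Longrightarrow> qinner n (part x) (part y) = 0"
  by (rule isotypic_orthogonal[OF part_isotypic part_isotypic]) auto

lemma orth_proj_isotypic:
  assumes "x \<le> n div 2"
  shows "orth_proj n (isotypic n x) v = part x"
proof (rule orth_proj_eqI[OF qsubspace_isotypic _ part_isotypic])
  show "isotypic n x \<subseteq> qspace n" using isotypic_eigenvector by blast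
  fix u assume u: "u \<in> isotypic n x"
  have "qdiff v (part x) = (\<lambda>S. v S - part x S)" by (simp add: qdiff_def)
  then have "qinner n u (qdiff v (part x)) = qinner n u v - qinner n u (part x)"
    by (simp add: qinner_diff_right)
  also have "qinner n u v = (\<Sum>y\<le>n div 2. 1 * qinner n u (part y))"
    using qinner_lincomb_right[of "{..n div 2}" n u "\<lambda>_. 1" part] part_sum by simp
  also have "\<dots> = qinner n u (part x) + (\<Sum>y\<in>{..n div 2} - {x}. qinner n u (part y))"
    using assms by (simp add: sum.remove)
  also have "(\<Sum>y\<in>{..n div 2} - {x}. qinner n u (part y)) = 0"
    using assms by (intro sum.neutral) (auto intro!: isotypic_orthogonal[OF u part_isotypic])
  finally show "qinner n u (qdiff v (part x)) = 0" by simp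
qed

lemma qnorm_sq_weighted_sum:
  fixes a :: "nat \<Rightarrow> real"
  shows "qnorm_sq n (\<lambda>S. \<Sum>x\<le>n div 2. of_real (a x) * part x S)
    = (\<Sum>x\<le>n div 2. (a x)^2 * qnorm_sq n (part x))"
proof -
  have "complex_of_real (qnorm_sq n (\<lambda>S. \<Sum>x\<le>n div 2. of_real (a x) * part x S))
      = (\<Sum>x\<le>n div 2. cnj (of_real (a x)) * of_real (a x) * qinner n (part x) (part x))"
    unfolding qinner_self_qnorm_sq[symmetric]
    by (rule qinner_orthogonal_sums) (auto intro: part_orthogonal)
  also have "\<dots> = complex_of_real (\<Sum>x\<le>n div 2. (a x)^2 * qnorm_sq n (part x))"
    by (simp add: qinner_self_qnorm_sq power2_eq_square)
  finally show ?thesis using of_real_eq_iff by blast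
qed

lemma qinner_orth_proj_isotypic:
  assumes "x \<le> n div 2"
  shows "Re (qinner n v (orth_proj n (isotypic n x) v)) = qnorm_sq n (part x)"
proof -
  have "qinner n v (part x) = (\<Sum>y\<le>n div 2. cnj 1 * qinner n (part y) (part x))"
    using qinner_lincomb_left[of "{..n div 2}" n "\<lambda>_. 1" part] part_sum by simp
  also have "\<dots> = qinner n (part x) (part x) + (\<Sum>y\<in>{..n div 2} - {x}. qinner n (part y) (part x))"
    using assms by (simp add: sum.remove)
  also have "(\<Sum>y\<in>{..n div 2} - {x}. qinner n (part y) (part x)) = 0"
    using assms by (intro sum.neutral) (auto intro!: part_orthogonal)
  finally show ?thesis using orth_proj_isotypic[OF assms] by (simp add: qinner_self_qnorm_sq)
qed

lemma qnorm_sq_sum_parts: "(\<Sum>x\<le>n div 2. qnorm_sq n (part x)) = qnorm_sq n v"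
  using qnorm_sq_weighted_sum[of "\<lambda>_. 1"] part_sum by simp

lemma qcasimir_part_sum:
  "qcasimir n v = (\<lambda>S. \<Sum>x\<le>n div 2. of_real (casimir_eigenvalue n x) * part x S)"
proof -
  have "qcasimir n v = (\<lambda>S. \<Sum>x\<le>n div 2. qcasimir n (part x) S)"
    by (subst part_sum) (simp add: qlinear_sum[OF qlinear_qcasimir])
  then show ?thesis using isotypic_eigenvector[OF part_isotypic] by (simp add: qscale_def)
qed

lemma qnorm_sq_qcasimir_shift:
  fixes c :: real
  shows "qnorm_sq n (\<lambda>S. qcasimir n v S - of_real c * v S)
    = (\<Sum>x\<le>n div 2. (casimir_eigenvalue n x - c)^2 * qnorm_sq n (part x))"
proof -
  have "(\<lambda>S. qcasimir n v S - of_real c * v S)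
      = (\<lambda>S. \<Sum>x\<le>n div 2. of_real (casimir_eigenvalue n x - c) * part x S)"
    unfolding qcasimir_part_sum
    by (subst part_sum) (simp add: sum_subtractf sum_distrib_left algebra_simps)
  then show ?thesis
    using qnorm_sq_weighted_sum[of "\<lambda>x. casimir_eigenvalue n x - c"] by (simp del: of_real_diff)
qed

end

section \<open>The state \<Xi> is almost an eigenvector of R L\<close>

lemma move_above:
  fixes i j k :: nat and S :: "nat set"
  assumes "k \<le> i" "k \<le> j" "j \<in> S" "i \<notin> S" "finite S"
  shows "insert i (S - {j}) \<inter> {..<k} = S \<inter> {..<k}"
    and "card (insert i (S - {j}) - {..<k}) = card (S - {..<k})"
proof -
  show "insert i (S - {j}) \<inter> {..<k} = S \<inter> {..<k}" using assms by auto
  have e: "insert i (S - {j}) - {..<k} = insert i ((S - {..<k}) - {j})" using assms by auto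
  have j: "j \<in> S - {..<k}" using assms by auto
  have i: "i \<notin> (S - {..<k}) - {j}" using assms by auto
  have f: "finite (S - {..<k})" using assms by auto
  have "card (insert i ((S - {..<k}) - {j})) = Suc (card ((S - {..<k}) - {j}))" using i f by simp
  also have "\<dots> = card (S - {..<k})" by (rule card_Suc_Diff1[OF f j])
  finally show "card (insert i (S - {j}) - {..<k}) = card (S - {..<k})" unfolding e .
qed

text \<open>M stands for m - l, the number of ones among the last n - k tensor factors of \<Xi>.\<close>

locale xi_state =
  fixes n k l M :: nat
  assumes lk: "l \<le> k" and kn: "k \<le> n" and Mle: "M \<le> n - k"
begin

abbreviation xi where "xi \<equiv> Xi n (l + M) k l"

definition xi_support :: "nat set set" where
  "xi_support = {T. T \<subseteq> {..<n} \<and> T \<inter> {..<k} = {..<l} \<and> card (T - {..<k}) = M}"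

definition xi_binom :: real where
  "xi_binom = real ((n - k) choose M)"

definition xi_amp :: complex where
  "xi_amp = complex_of_real (1 / sqrt xi_binom)"

lemma xi_binom_pos: "xi_binom > 0"
  unfolding xi_binom_def using Mle by simp

lemma xi_support_subset: "T \<in> xi_support \<Longrightarrow> T \<subseteq> {..<n}"
  by (simp add: xi_support_def)

lemma finite_xi_support: "finite xi_support"
  by (rule finite_subset[of _ "Pow {..<n}"]) (auto simp: xi_support_def)

lemma card_mem_xi_support:
  assumes "S \<in> xi_support"
  shows "card S = l + M"
proof -
  have "finite S" using xi_support_subset[OF assms] finite_subset_lessThan by blast
  then have "card S = card (S \<inter> {..<k}) + card (S - {..<k})" by (metis card_Int_Diff)
  then show ?thesis using assms unfolding xi_support_def by simp
qed

lemma Xi_eq_indicator: "xi = (\<lambda>T. if T \<in> xi_support then xi_amp else 0)"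
  by (simp add: Xi_def xi_support_def xi_amp_def xi_binom_def fun_eq_iff)

lemma card_xi_support: "card xi_support = (n - k) choose M"
proof -
  have "bij_betw (\<lambda>U. {..<l} \<union> U) {U. U \<subseteq> {k..<n} \<and> card U = M} xi_support"
  proof (rule bij_betw_byWitness[where f' = "\<lambda>T. T - {..<k}"])
    show "\<forall>U\<in>{U. U \<subseteq> {k..<n} \<and> card U = M}. ({..<l} \<union> U) - {..<k} = U" using lk by auto
    show "\<forall>T\<in>xi_support. {..<l} \<union> (T - {..<k}) = T" unfolding xi_support_def by auto
    show "(\<lambda>U. {..<l} \<union> U) ` {U. U \<subseteq> {k..<n} \<and> card U = M} \<subseteq> xi_support"
    proof
      fix T assume "T \<in> (\<lambda>U. {..<l} \<union> U) ` {U. U \<subseteq> {k..<n} \<and> card U = M}"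
      then obtain U where U: "U \<subseteq> {k..<n}" "card U = M" "T = {..<l} \<union> U" by auto
      have "({..<l} \<union> U) - {..<k} = U" using U(1) lk by auto
      then show "T \<in> xi_support" unfolding xi_support_def using U lk kn by auto
    qed
    show "(\<lambda>T. T - {..<k}) ` xi_support \<subseteq> {U. U \<subseteq> {k..<n} \<and> card U = M}"
      unfolding xi_support_def by auto
  qed
  then have "card xi_support = card {U. U \<subseteq> {k..<n} \<and> card U = M}" by (simp add: bij_betw_same_card)
  also have "\<dots> = (n - k) choose M" by (simp add: n_subsets)
  finally show ?thesis by simp
qed

lemma Xi_weight_space: "xi \<in> weight_space n (l + M)"
  unfolding weight_space_def qspace_def Xi_eq_indicator
  using xi_support_subset card_mem_xi_support by auto

lemma norm_xi_amp_sq: "(cmod xi_amp)^2 = 1 / xi_binom"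
proof -
  have "cmod xi_amp = \<bar>1 / sqrt xi_binom\<bar>" unfolding xi_amp_def by (rule norm_of_real)
  then have "cmod xi_amp = 1 / sqrt xi_binom" using xi_binom_pos by simp
  then show ?thesis using xi_binom_pos by (simp add: power_divide)
qed

lemma qnorm_sq_Xi: "qnorm_sq n xi = 1"
proof -
  have "qnorm_sq n xi = (\<Sum>T\<in>Pow {..<n}. if T \<in> xi_support then (cmod xi_amp)^2 else 0)"
    unfolding qnorm_sq_def Xi_eq_indicator by (intro sum.cong) auto
  also have "\<dots> = (\<Sum>T\<in>xi_support. if T \<in> xi_support then (cmod xi_amp)^2 else 0)"
    by (rule sum.mono_neutral_right) (auto simp: xi_support_def)
  also have "\<dots> = (\<Sum>T\<in>xi_support. (cmod xi_amp)^2)" by simp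
  also have "\<dots> = 1" using xi_binom_pos by (simp add: norm_xi_amp_sq card_xi_support xi_binom_def)
  finally show ?thesis by simp
qed

definition xi_moves :: "nat set \<Rightarrow> (nat \<times> nat) set" where
  "xi_moves S = {p \<in> S \<times> ({..<n} - S). insert (snd p) (S - {fst p}) \<in> xi_support}"

definition xi_diag :: complex where
  "xi_diag = of_nat (l + M + M * (n - k - M))"

definition xi_defect :: qvec where
  "xi_defect = (\<lambda>S. qraise n (qlower n xi) S - xi_diag * xi S)"

lemma finite_xi_moves: "S \<subseteq> {..<n} \<Longrightarrow> finite (xi_moves S)"
  unfolding xi_moves_def
  by (rule finite_subset[of _ "S \<times> {..<n}"]) (auto intro: finite_subset_lessThan)

lemma qraise_qlower_Xi:
  assumes S: "S \<subseteq> {..<n}"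
  shows "qraise n (qlower n xi) S = of_nat (card S) * xi S + xi_amp * of_nat (card (xi_moves S))"
proof -
  have f: "finite S" using S by (rule finite_subset_lessThan)
  have "(\<Sum>j\<in>S. \<Sum>i\<in>{..<n} - S. xi (insert i (S - {j})))
      = (\<Sum>p\<in>S \<times> ({..<n} - S). if insert (snd p) (S - {fst p}) \<in> xi_support then xi_amp else 0)"
    unfolding Xi_eq_indicator by (subst sum.cartesian_product) (simp add: split_def)
  also have "\<dots> = (\<Sum>p\<in>xi_moves S. xi_amp)" unfolding xi_moves_def using f by (subst sum.inter_filter) auto
  also have "\<dots> = xi_amp * of_nat (card (xi_moves S))" by simp
  finally show ?thesis using qraise_qlower_apply[OF S, of xi] by simp
qed

lemma card_xi_moves_support:
  assumes S: "S \<in> xi_support"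
  shows "card (xi_moves S) = M * (n - k - M)"
proof -
  have Sn: "S \<subseteq> {..<n}" and Sk: "S \<inter> {..<k} = {..<l}" and Sc: "card (S - {..<k}) = M"
    using S by (auto simp: xi_support_def)
  have f: "finite S" using Sn by (rule finite_subset_lessThan)
  have "xi_moves S = (S - {..<k}) \<times> ({k..<n} - S)"
  proof (intro set_eqI iffI)
    fix p assume p: "p \<in> xi_moves S"
    obtain j i where ji: "p = (j, i)" by fastforce
    have j: "j \<in> S" and i: "i < n" "i \<notin> S" and T: "insert i (S - {j}) \<in> xi_support"
      using p ji by (auto simp: xi_moves_def)
    have Tk: "insert i (S - {j}) \<inter> {..<k} = {..<l}" using T by (simp add: xi_support_def)
    have "\<not> j < k"
    proof
      assume "j < k"
      then have "j < l" using j Sk by auto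
      then have "j \<in> insert i (S - {j})" using Tk \<open>j < k\<close> lk by auto
      then show False using i j by auto
    qed
    moreover have "\<not> i < k"
    proof
      assume "i < k"
      then have "i < l" using Tk by auto
      then have "i \<in> S" using Sk lk by auto
      then show False using i by simp
    qed
    ultimately show "p \<in> (S - {..<k}) \<times> ({k..<n} - S)" using ji j i by auto
  next
    fix p assume p: "p \<in> (S - {..<k}) \<times> ({k..<n} - S)"
    obtain j i where ji: "p = (j, i)" by fastforce
    have j: "j \<in> S" "k \<le> j" and i: "i < n" "i \<notin> S" "k \<le> i" using p ji by auto
    note mk = move_above[OF i(3) j(2) j(1) i(2) f]
    have "insert i (S - {j}) \<in> xi_support" unfolding xi_support_def using mk Sn Sk Sc i by auto
    then show "p \<in> xi_moves S" unfolding xi_moves_def using ji j i by auto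
  qed
  moreover have "card ({k..<n} - S) = n - k - M"
  proof -
    have "{k..<n} \<inter> S = S - {..<k}" using Sn by auto
    then have "card ({k..<n} - S) = card {k..<n} - card (S - {..<k})"
      by (metis card_Diff_subset_Int finite_atLeastLessThan finite_Int inf_commute)
    then show ?thesis using Sc by simp
  qed
  ultimately show ?thesis using Sc by (simp add: card_cartesian_product)
qed

text \<open>A move into the support from outside it either removes the unique element of
  S \<inter> {..<k} - {..<l} or fills the unique hole {..<l} - S.\<close>

lemma xi_moves_source_below:
  assumes "(j, i) \<in> xi_moves S" "j < k" "(j', i') \<in> xi_moves S" "j' < k"
  shows "j' = j"
proof (rule ccontr)
  assume "j' \<noteq> j"
  have T: "insert i (S - {j}) \<inter> {..<k} = {..<l}" "insert i' (S - {j'}) \<inter> {..<k} = {..<l}"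
    using assms(1,3) by (simp_all add: xi_moves_def xi_support_def)
  have "j' \<in> S" "j' \<notin> insert i' (S - {j'})" using assms(3) by (auto simp: xi_moves_def)
  then have "j' \<in> insert i (S - {j}) \<inter> {..<k}" "j' \<notin> {..<l}"
    using \<open>j' \<noteq> j\<close> assms(4) T(2) by auto
  then show False using T(1) by blast
qed

lemma xi_moves_target_below:
  assumes "(j, i) \<in> xi_moves S" "i < k" "(j', i') \<in> xi_moves S" "i' < k"
  shows "i' = i"
proof -
  have T: "insert i (S - {j}) \<inter> {..<k} = {..<l}" "insert i' (S - {j'}) \<inter> {..<k} = {..<l}"
    using assms(1,3) by (simp_all add: xi_moves_def xi_support_def)
  have "i' \<notin> S" using assms(3) by (auto simp: xi_moves_def)
  moreover have "i' \<in> {..<l}" using T(2) assms(4) by auto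
  ultimately show ?thesis using T(1) lk by auto
qed

lemma xi_moves_above:
  assumes "(j, i) \<in> xi_moves S" "k \<le> j" "k \<le> i" "S \<subseteq> {..<n}"
  shows "S \<in> xi_support"
proof -
  have "j \<in> S" "i \<notin> S" "insert i (S - {j}) \<in> xi_support" using assms(1) by (auto simp: xi_moves_def)
  with move_above[OF assms(3,2) _ _ finite_subset_lessThan[OF assms(4)]] show ?thesis
    using assms(4) by (simp add: xi_support_def)
qed

lemma card_xi_moves_outside:
  assumes Sn: "S \<subseteq> {..<n}" and nS: "S \<notin> xi_support"
  shows "card (xi_moves S) \<le> 2 * n"
proof -
  define J where "J = {j. \<exists>i. (j, i) \<in> xi_moves S \<and> j < k}"
  define I where "I = {i. \<exists>j. (j, i) \<in> xi_moves S \<and> i < k}"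
  have fJ: "finite J" and fI: "finite I" by (auto intro: finite_subset[of _ "{..<k}"] simp: J_def I_def)
  have "\<forall>a\<in>J. \<forall>b\<in>J. a = b" unfolding J_def using xi_moves_source_below by blast
  then have J: "card J \<le> 1" using card_le_Suc0_iff_eq[OF fJ] by simp
  have "\<forall>a\<in>I. \<forall>b\<in>I. a = b" unfolding I_def using xi_moves_target_below by blast
  then have I: "card I \<le> 1" using card_le_Suc0_iff_eq[OF fI] by simp
  have "xi_moves S \<subseteq> J \<times> {..<n} \<union> {..<n} \<times> I"
  proof (rule subsetI)
    fix p assume p: "p \<in> xi_moves S"
    obtain j i where ji: "p = (j, i)" by fastforce
    have n: "j < n" "i < n" using p Sn unfolding ji by (auto simp: xi_moves_def)
    have "\<not> (k \<le> j \<and> k \<le> i)" using xi_moves_above[of j i S] p Sn nS unfolding ji by blast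
    then have "j < k \<or> i < k" by linarith
    then show "p \<in> J \<times> {..<n} \<union> {..<n} \<times> I" using p n unfolding ji J_def I_def by blast
  qed
  then have "card (xi_moves S) \<le> card (J \<times> {..<n} \<union> {..<n} \<times> I)"
    by (rule card_mono[rotated]) (simp add: fJ fI)
  also have "\<dots> \<le> card (J \<times> {..<n}) + card ({..<n} \<times> I)" by (rule card_Un_le)
  also have "\<dots> \<le> 1 * n + n * 1"
    unfolding card_cartesian_product card_lessThan using J I by (intro add_mono mult_le_mono) simp_all
  finally show ?thesis by simp
qed

lemma xi_defect_support:
  assumes S: "S \<in> xi_support"
  shows "xi_defect S = 0"
proof -
  have "xi S = xi_amp" using S by (simp add: Xi_eq_indicator)
  then show ?thesis
    using S xi_support_subset
    unfolding xi_defect_def qraise_qlower_Xi[OF xi_support_subset[OF S]] card_xi_moves_support[OF S]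
      xi_diag_def card_mem_xi_support[OF S]
    by (simp add: algebra_simps)
qed

lemma xi_defect_outside_support:
  assumes "S \<subseteq> {..<n}" "S \<notin> xi_support"
  shows "xi_defect S = xi_amp * of_nat (card (xi_moves S))"
  using assms unfolding xi_defect_def qraise_qlower_Xi[OF assms(1)] by (simp add: Xi_eq_indicator)

text \<open>Undoing a move recovers the source, and every move into the support from outside touches
  one of the first k positions.\<close>

lemma card_xi_move_pairs:
  "card (Sigma (Pow {..<n} - xi_support) xi_moves) \<le> card xi_support * (2 * n * k)"
proof -
  define Q where "Q = Sigma (Pow {..<n} - xi_support) xi_moves"
  define Z where "Z = ({..<n} \<times> {..<k}) \<union> ({..<k} \<times> {..<n})"
  define f :: "nat set \<times> nat \<times> nat \<Rightarrow> nat set \<times> nat \<times> nat"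
    where "f = (\<lambda>(S, j, i). (insert i (S - {j}), j, i))"
  have "inj_on f Q"
  proof (rule inj_on_inverseI[where g = "\<lambda>(T, j, i). (insert j (T - {i}), j, i)"])
    fix q assume "q \<in> Q"
    then obtain S j i where "q = (S, j, i)" "j \<in> S" "i \<notin> S" by (auto simp: Q_def xi_moves_def)
    then show "(\<lambda>(T, j, i). (insert j (T - {i}), j, i)) (f q) = q" by (auto simp: f_def)
  qed
  moreover have "f ` Q \<subseteq> xi_support \<times> Z"
  proof (rule image_subsetI)
    fix q assume "q \<in> Q"
    then obtain S j i where q: "q = (S, j, i)" and S: "S \<subseteq> {..<n}" "S \<notin> xi_support"
      and ji: "(j, i) \<in> xi_moves S" by (auto simp: Q_def)
    have "j < n" "i < n" "insert i (S - {j}) \<in> xi_support" using ji S by (auto simp: xi_moves_def)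
    moreover have "j < k \<or> i < k" using xi_moves_above[OF ji _ _ S(1)] S(2) by linarith
    ultimately show "f q \<in> xi_support \<times> Z" by (auto simp: q f_def Z_def)
  qed
  ultimately have "card Q \<le> card (xi_support \<times> Z)"
    by (rule card_inj_on_le) (simp add: finite_xi_support Z_def)
  also have "\<dots> \<le> card xi_support * (2 * n * k)"
  proof -
    have "card Z \<le> card ({..<n} \<times> {..<k}) + card ({..<k} \<times> {..<n})" unfolding Z_def by (rule card_Un_le)
    then have "card Z \<le> 2 * n * k" by (simp add: card_cartesian_product mult.commute)
    then show ?thesis unfolding card_cartesian_product by (rule mult_le_mono2)
  qed
  finally show ?thesis unfolding Q_def .
qed

lemma qnorm_sq_xi_defect: "qnorm_sq n xi_defect \<le> 4 * real n ^ 3"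
proof -
  let ?P = "Pow {..<n} - xi_support" and ?c = "\<lambda>S. real (card (xi_moves S))"
  have "qnorm_sq n xi_defect = (\<Sum>S\<in>?P. (cmod (xi_defect S))^2)"
    unfolding qnorm_sq_def by (rule sum.mono_neutral_right) (auto simp: xi_defect_support)
  also have "\<dots> = (\<Sum>S\<in>?P. ?c S * ?c S / xi_binom)"
    by (intro sum.cong refl)
       (simp add: xi_defect_outside_support norm_mult power_mult_distrib norm_xi_amp_sq,
        simp add: power2_eq_square)
  also have "\<dots> \<le> (\<Sum>S\<in>?P. ?c S * (2 * real n) / xi_binom)"
  proof (intro sum_mono divide_right_mono mult_left_mono)
    fix S assume "S \<in> ?P"
    then have "card (xi_moves S) \<le> 2 * n" using card_xi_moves_outside by blast
    then show "?c S \<le> 2 * real n" by linarith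
  qed (use xi_binom_pos in auto)
  also have "\<dots> = 2 * real n / xi_binom * (\<Sum>S\<in>?P. ?c S)"
    by (simp add: sum_distrib_left ac_simps)
  also have "(\<Sum>S\<in>?P. ?c S) = real (card (Sigma ?P xi_moves))"
    by (subst card_SigmaI) (auto intro: finite_xi_moves)
  also have "2 * real n / xi_binom * real (card (Sigma ?P xi_moves))
      \<le> 2 * real n / xi_binom * real (card xi_support * (2 * n * k))"
    using card_xi_move_pairs xi_binom_pos by (intro mult_left_mono of_nat_mono) simp_all
  also have "\<dots> = 4 * real n * real n * real k"
    using xi_binom_pos by (simp add: card_xi_support xi_binom_def[symmetric])
  also have "\<dots> \<le> 4 * real n ^ 3" using kn by (simp add: power3_eq_cube mult_left_mono)
  finally show ?thesis .
qed

text \<open>On weight l + M, K = 2(w(n - w + 1) - R L), and R L \<Xi> is xi_diag \<Xi> up to xi_defect.\<close>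

definition xi_casimir_mean :: real where
  "xi_casimir_mean = 2 * (real (l + M) * (real n - real (l + M) + 1) - real (l + M + M * (n - k - M)))"

abbreviation xi_pmf where "xi_pmf \<equiv> pmf_p n (l + M) k l"

lemma qcasimir_Xi: "qcasimir n xi = (\<lambda>S. of_real xi_casimir_mean * xi S - 2 * xi_defect S)"
proof
  fix S
  have c: "complex_of_real xi_casimir_mean
      = 2 * (of_nat (l + M) * (of_nat n - of_nat (l + M) + 1)) - 2 * xi_diag"
    unfolding xi_casimir_mean_def xi_diag_def by simp
  show "qcasimir n xi S = of_real xi_casimir_mean * xi S - 2 * xi_defect S"
    unfolding qcasimir_weight_space[OF Xi_weight_space] xi_defect_def c by (simp add: algebra_simps)
qed

lemma xi_pmf_moments:
  shows "\<forall>x\<le>n div 2. xi_pmf x \<ge> 0"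
    and "(\<Sum>x\<le>n div 2. xi_pmf x) = 1"
    and "(\<Sum>x\<le>n div 2. (casimir_eigenvalue n x - xi_casimir_mean)^2 * xi_pmf x) \<le> 16 * real n ^ 3"
proof -
  have "l + M \<le> n" using lk kn Mle by linarith
  from weight_space_isotypic_decomposition[OF Xi_weight_space this]
  obtain part where "\<forall>x. part x \<in> isotypic n x" "xi = (\<lambda>S. \<Sum>x\<le>n div 2. part x S)"
    by (elim exE conjE)
  then interpret D: isotypic_decomposition n xi part by unfold_locales auto
  have p: "xi_pmf x = qnorm_sq n (part x)" if "x \<le> n div 2" for x
    unfolding pmf_p_def using D.qinner_orth_proj_isotypic[OF that] .
  show "\<forall>x\<le>n div 2. xi_pmf x \<ge> 0" using p qnorm_sq_nonneg by simp
  show "(\<Sum>x\<le>n div 2. xi_pmf x) = 1" using D.qnorm_sq_sum_parts qnorm_sq_Xi p by simp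
  have "(\<Sum>x\<le>n div 2. (casimir_eigenvalue n x - xi_casimir_mean)^2 * xi_pmf x)
      = qnorm_sq n (\<lambda>S. qcasimir n xi S - of_real xi_casimir_mean * xi S)"
    using D.qnorm_sq_qcasimir_shift[of xi_casimir_mean] p by simp
  also have "\<dots> = qnorm_sq n (\<lambda>S. (-2) * xi_defect S)" by (simp add: qcasimir_Xi)
  also have "\<dots> = 4 * qnorm_sq n xi_defect" using qnorm_sq_scale[of n "-2" xi_defect] by simp
  also have "\<dots> \<le> 16 * real n ^ 3" using qnorm_sq_xi_defect by simp
  finally show "(\<Sum>x\<le>n div 2. (casimir_eigenvalue n x - xi_casimir_mean)^2 * xi_pmf x) \<le> 16 * real n ^ 3" .
qed

end

section \<open>Concentration\<close>

lemma sum_le_moment_div: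
  fixes p g :: "'a \<Rightarrow> real"
  assumes "finite A" "B \<subseteq> A" "\<And>x. x \<in> A \<Longrightarrow> 0 \<le> p x" "\<And>x. x \<in> A \<Longrightarrow> 0 \<le> g x"
    and "\<And>x. x \<in> B \<Longrightarrow> t \<le> g x" "t > 0"
  shows "(\<Sum>x\<in>B. p x) \<le> (\<Sum>x\<in>A. g x * p x) / t"
proof -
  have "(\<Sum>x\<in>B. p x) \<le> (\<Sum>x\<in>B. g x * p x / t)"
  proof (rule sum_mono)
    fix x assume x: "x \<in> B"
    then have "1 * p x \<le> (g x / t) * p x"
      using assms(2,3,5,6) by (intro mult_right_mono) (auto simp: field_simps)
    then show "p x \<le> g x * p x / t" by simp
  qed
  also have "\<dots> \<le> (\<Sum>x\<in>A. g x * p x / t)"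
    using assms by (intro sum_mono2) auto
  finally show ?thesis by (simp add: sum_divide_distrib)
qed

lemma real_nat_floor_of_Ints: "(z::real) \<in> \<int> \<Longrightarrow> z \<ge> 0 \<Longrightarrow> real (nat \<lfloor>z\<rfloor>) = z"
  by (metis Ints_cases floor_of_int of_int_0_le_iff of_int_of_nat_eq of_nat_nat)

lemma mu_smaller_root:
  fixes \<alpha> \<beta> \<gamma> \<delta> :: real
  assumes "\<alpha> \<ge> 0" "\<beta> \<ge> 0" "\<gamma> \<ge> 0" "\<delta> \<ge> 0" "\<alpha> + \<beta> + \<gamma> + \<delta> = 1"
  defines "s \<equiv> \<alpha> * \<gamma> + \<alpha> * \<delta> + \<beta> * \<gamma>"
  defines "\<mu> \<equiv> (1 - sqrt (1 - 4 * s)) / 2"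
  shows "0 \<le> \<mu>" "\<mu> \<le> 1/2" "s = \<mu> * (1 - \<mu>)"
proof -
  have s2: "s = (\<alpha> + \<beta>) * (\<gamma> + \<delta>) - \<beta> * \<delta>" unfolding s_def by (simp add: algebra_simps)
  have "4 * ((\<alpha> + \<beta>) * (\<gamma> + \<delta>)) = (\<alpha> + \<beta> + \<gamma> + \<delta>)^2 - (\<alpha> + \<beta> - \<gamma> - \<delta>)^2"
    by (simp add: algebra_simps power2_eq_square)
  also have "\<dots> \<le> 1" using assms(5) by simp
  finally have h4: "4 * ((\<alpha> + \<beta>) * (\<gamma> + \<delta>)) \<le> 1" .
  have "\<beta> * \<delta> \<ge> 0" using assms(2,4) by simp
  then have "4 * s \<le> 1" unfolding s2 using h4 by (simp only: right_diff_distrib)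
  moreover have "s \<ge> 0" unfolding s_def using assms(1-4) by simp
  ultimately have D: "0 \<le> 1 - 4 * s" "1 - 4 * s \<le> 1" by auto
  then have q: "0 \<le> sqrt (1 - 4 * s)" "sqrt (1 - 4 * s) \<le> 1" by auto
  show "0 \<le> \<mu>" "\<mu> \<le> 1/2" unfolding \<mu>_def using q by auto
  have "\<mu> * (1 - \<mu>) = (1 - (sqrt (1 - 4 * s))^2) / 4"
    unfolding \<mu>_def by (simp add: field_simps power2_eq_square)
  also have "(sqrt (1 - 4 * s))^2 = 1 - 4 * s" using D by simp
  finally show "s = \<mu> * (1 - \<mu>)" by simp
qed

text \<open>With t = x/n, x(n - x) - \<mu>(1 - \<mu>)n^2 = n^2 (t - \<mu>)(1 - t - \<mu>), and for t \<le> 1/2 the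
  second factor is at least as large as the first in absolute value.\<close>

lemma casimir_eigenvalue_deviation:
  fixes x n \<mu> \<epsilon> :: real
  assumes mu: "0 \<le> \<mu>" "\<mu> \<le> 1/2" and n: "n > 0" and x: "0 \<le> x" "x \<le> n / 2"
    and far: "\<bar>x / n - \<mu>\<bar> > \<epsilon>" and e: "\<epsilon> > 0" and nb: "n \<ge> 2 / \<epsilon>^2"
  shows "\<bar>2 * x * (n - x + 1) - 2 * (\<mu> * (1 - \<mu>)) * n^2\<bar> \<ge> \<epsilon>^2 * n^2"
proof -
  define t where "t = x / n"
  define a where "a = n^2 * ((t - \<mu>) * (1 - t - \<mu>))"
  have t: "0 \<le> t" "t \<le> 1/2" "\<bar>t - \<mu>\<bar> > \<epsilon>" using x n far unfolding t_def by (auto simp: field_simps)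
  have "\<bar>1 - t - \<mu>\<bar> \<ge> \<bar>t - \<mu>\<bar>" using t mu by auto
  then have "\<bar>(t - \<mu>) * (1 - t - \<mu>)\<bar> \<ge> \<epsilon> * \<epsilon>"
    unfolding abs_mult using t e by (intro mult_mono) auto
  then have "\<bar>a\<bar> \<ge> n^2 * \<epsilon>^2"
    unfolding a_def abs_mult using n by (simp add: mult_left_mono power2_eq_square)
  moreover have "x \<le> n^2 * \<epsilon>^2 / 2"
  proof -
    have "n * \<epsilon>^2 \<ge> 2" using nb e by (simp add: field_simps)
    then have "n * (n * \<epsilon>^2) \<ge> n * 2" using n by (intro mult_left_mono) auto
    moreover have "n^2 * \<epsilon>^2 = n * (n * \<epsilon>^2)" by (simp add: power2_eq_square)
    ultimately show ?thesis using x by linarith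
  qed
  moreover have "x * (n - x + 1) - \<mu> * (1 - \<mu>) * n^2 = a + x"
    using n unfolding a_def t_def by (simp add: field_simps power2_eq_square)
  moreover have "\<bar>a + x\<bar> \<ge> \<bar>a\<bar> - x" using x(1) by (auto simp: abs_if)
  ultimately have "\<bar>x * (n - x + 1) - \<mu> * (1 - \<mu>) * n^2\<bar> \<ge> n^2 * \<epsilon>^2 / 2" by linarith
  moreover have "2 * x * (n - x + 1) - 2 * (\<mu> * (1 - \<mu>)) * n^2
      = 2 * (x * (n - x + 1) - \<mu> * (1 - \<mu>) * n^2)" by (simp add: algebra_simps)
  ultimately show ?thesis by (simp only: abs_mult) (simp add: mult.commute)
qed

lemma pmf_p_fractions:
  fixes \<alpha> \<beta> \<gamma> \<delta> :: real and n :: nat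
  assumes abcd: "\<alpha> \<ge> 0" "\<beta> \<ge> 0" "\<gamma> \<ge> 0" "\<delta> \<ge> 0" "\<alpha> + \<beta> + \<gamma> + \<delta> = 1"
    and ints: "\<alpha> * real n \<in> \<int>" "(\<alpha> + \<beta>) * real n \<in> \<int>" "(\<alpha> + \<gamma>) * real n \<in> \<int>"
  defines "l \<equiv> nat \<lfloor>\<alpha> * real n\<rfloor>" and "m \<equiv> nat \<lfloor>(\<alpha> + \<beta>) * real n\<rfloor>"
    and "k \<equiv> nat \<lfloor>(\<alpha> + \<gamma>) * real n\<rfloor>"
  shows "xi_state n k l (m - l)" and "l + (m - l) = m"
    and "xi_state.xi_casimir_mean n k l (m - l) = 2 * (\<alpha> * \<gamma> + \<alpha> * \<delta> + \<beta> * \<gamma>) * (real n)^2"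
proof -
  have rl: "real l = \<alpha> * real n" unfolding l_def
    using ints(1) abcd by (intro real_nat_floor_of_Ints) auto
  have rm: "real m = (\<alpha> + \<beta>) * real n" unfolding m_def
    using ints(2) abcd by (intro real_nat_floor_of_Ints) auto
  have rk: "real k = (\<alpha> + \<gamma>) * real n" unfolding k_def
    using ints(3) abcd by (intro real_nat_floor_of_Ints) auto
  have "real l \<le> real k" "real l \<le> real m" using rl rk rm abcd by (simp_all add: distrib_right)
  then have lk: "l \<le> k" and lm: "l \<le> m" by simp_all
  have rM: "real (m - l) = \<beta> * real n" using rl rm lm by (simp add: of_nat_diff algebra_simps)
  have "real (m - l) + real k \<le> real n"
    using abcd mult_right_mono[of "\<alpha> + \<beta> + \<gamma>" 1 "real n"] unfolding rM rk by (simp add: algebra_simps)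
  then have kn: "k \<le> n" and Mle: "m - l \<le> n - k" by linarith+
  show X: "xi_state n k l (m - l)" by unfold_locales (use lk kn Mle in auto)
  show lm': "l + (m - l) = m" using lm by simp
  have "real (n - k - (m - l)) = real n - real k - real (m - l)" using Mle kn by (simp add: of_nat_diff)
  then have "xi_state.xi_casimir_mean n k l (m - l)
      = 2 * (real m * (real n - real m + 1) - (real m + real (m - l) * (real n - real k - real (m - l))))"
    unfolding xi_state.xi_casimir_mean_def[OF X] lm' by simp
  also have "\<dots> = 2 * (\<alpha> * \<gamma> + \<alpha> * \<delta> + \<beta> * \<gamma>) * (real n)^2"
  proof -
    have d: "\<delta> = 1 - \<alpha> - \<beta> - \<gamma>" using abcd(5) by simp
    show ?thesis unfolding rm rM rk d by (simp add: algebra_simps power2_eq_square)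
  qed
  finally show "xi_state.xi_casimir_mean n k l (m - l) = 2 * (\<alpha> * \<gamma> + \<alpha> * \<delta> + \<beta> * \<gamma>) * (real n)^2" .
qed

lemma pmf_p_tail_bound:
  fixes \<alpha> \<beta> \<gamma> \<delta> :: real and n :: nat
  assumes abcd: "\<alpha> \<ge> 0" "\<beta> \<ge> 0" "\<gamma> \<ge> 0" "\<delta> \<ge> 0" "\<alpha> + \<beta> + \<gamma> + \<delta> = 1"
    and ints: "\<alpha> * real n \<in> \<int>" "(\<alpha> + \<beta>) * real n \<in> \<int>" "(\<alpha> + \<gamma>) * real n \<in> \<int>"
    and e: "\<epsilon> > 0" and n: "n > 0" "real n \<ge> 2 / \<epsilon>^2"
  defines "l \<equiv> nat \<lfloor>\<alpha> * real n\<rfloor>" and "m \<equiv> nat \<lfloor>(\<alpha> + \<beta>) * real n\<rfloor>"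
    and "k \<equiv> nat \<lfloor>(\<alpha> + \<gamma>) * real n\<rfloor>"
    and "\<mu> \<equiv> (1 - sqrt (1 - 4 * (\<alpha> * \<gamma> + \<alpha> * \<delta> + \<beta> * \<gamma>))) / 2"
  shows "(\<forall>x\<le>n div 2. pmf_p n m k l x \<ge> 0) \<and> (\<Sum>x\<le>n div 2. pmf_p n m k l x) = 1
    \<and> (\<Sum>x\<in>{x. x \<le> n div 2 \<and> \<bar>real x / real n - \<mu>\<bar> > \<epsilon>}. pmf_p n m k l x) \<le> 16 / (\<epsilon>^4 * real n)"
proof -
  note frac = pmf_p_fractions[OF abcd ints, folded l_def m_def k_def]
  interpret X: xi_state n k l "m - l" by (rule frac(1))
  note moments = X.xi_pmf_moments[unfolded frac(2)]
  note mu = mu_smaller_root[OF abcd, folded \<mu>_def]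
  let ?B = "{x. x \<le> n div 2 \<and> \<bar>real x / real n - \<mu>\<bar> > \<epsilon>}"
  have far: "\<epsilon>^4 * real n ^ 4 \<le> (casimir_eigenvalue n x - X.xi_casimir_mean)^2" if x: "x \<in> ?B" for x
  proof -
    have "x \<le> n div 2" using x by simp
    then have "2 * x \<le> n" by presburger
    then have "\<epsilon>^2 * (real n)^2 \<le> \<bar>casimir_eigenvalue n x - X.xi_casimir_mean\<bar>"
      using casimir_eigenvalue_deviation[OF mu(1,2) _ _ _ _ e n(2), of "real x"] x n(1)
      unfolding casimir_eigenvalue_def frac(3) mu(3) by (simp add: algebra_simps)
    from power_mono[OF this, of 2] show ?thesis by (simp add: power_mult_distrib flip: power_mult)
  qed
  have "(\<Sum>x\<in>?B. pmf_p n m k l x)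
      \<le> (\<Sum>x\<le>n div 2. (casimir_eigenvalue n x - X.xi_casimir_mean)^2 * pmf_p n m k l x) / (\<epsilon>^4 * real n ^ 4)"
    using moments(1) far e n(1) by (intro sum_le_moment_div) auto
  also have "\<dots> \<le> 16 * real n ^ 3 / (\<epsilon>^4 * real n ^ 4)"
    using moments(3) e n(1) by (intro divide_right_mono) auto
  also have "\<dots> = 16 / (\<epsilon>^4 * real n)" using n(1) by (simp add: field_simps power_numeral_reduce)
  finally show ?thesis using moments(1,2) by simp
qed

lemma mean_deviation_le:
  fixes p :: "nat \<Rightarrow> real" and \<mu> \<epsilon> :: real
  assumes n: "n > 0" and mu: "0 \<le> \<mu>" "\<mu> \<le> 1" and e: "\<epsilon> \<ge> 0"
    and p: "\<forall>x\<le>n div 2. 0 \<le> p x" "(\<Sum>x\<le>n div 2. p x) = 1"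
  shows "\<bar>(\<Sum>x\<le>n div 2. real x * p x) - real n * \<mu>\<bar>
    \<le> \<epsilon> * real n + real n * (\<Sum>x\<in>{x. x \<le> n div 2 \<and> \<bar>real x / real n - \<mu>\<bar> > \<epsilon>}. p x)"
proof -
  let ?B = "{x. x \<le> n div 2 \<and> \<bar>real x / real n - \<mu>\<bar> > \<epsilon>}"
  have dev: "\<bar>real x - real n * \<mu>\<bar> \<le> \<epsilon> * real n + (if x \<in> ?B then real n else 0)"
    if x: "x \<le> n div 2" for x
  proof (cases "x \<in> ?B")
    case True
    have "2 * x \<le> n" using x by presburger
    then have "real x \<le> real n" "0 \<le> real n * \<mu>" "real n * \<mu> \<le> real n" "0 \<le> \<epsilon> * real n"
      using mu e mult_left_mono[OF mu(2), of "real n"] by auto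
    then show ?thesis using True by (simp add: abs_le_iff)
  next
    case False
    then have "\<bar>real x / real n - \<mu>\<bar> \<le> \<epsilon>" using x by auto
    then have "\<bar>real n * (real x / real n - \<mu>)\<bar> \<le> real n * \<epsilon>"
      unfolding abs_mult using n by (simp add: mult_left_mono)
    moreover have "real n * (real x / real n - \<mu>) = real x - real n * \<mu>"
      using n by (simp add: field_simps)
    ultimately show ?thesis using False by (simp add: mult.commute)
  qed
  have "\<bar>(\<Sum>x\<le>n div 2. real x * p x) - real n * \<mu>\<bar> = \<bar>\<Sum>x\<le>n div 2. (real x - real n * \<mu>) * p x\<bar>"
    using p(2) by (simp add: left_diff_distrib sum_subtractf flip: sum_distrib_left)
  also have "\<dots> \<le> (\<Sum>x\<le>n div 2. (\<epsilon> * real n + (if x \<in> ?B then real n else 0)) * p x)"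
  proof (rule order_trans[OF sum_abs sum_mono])
    fix x assume "x \<in> {..n div 2}"
    then have "x \<le> n div 2" "0 \<le> p x" using p(1) by auto
    then show "\<bar>(real x - real n * \<mu>) * p x\<bar> \<le> (\<epsilon> * real n + (if x \<in> ?B then real n else 0)) * p x"
      unfolding abs_mult abs_of_nonneg[OF \<open>0 \<le> p x\<close>] using dev by (intro mult_right_mono) auto
  qed
  also have "\<dots> = \<epsilon> * real n * (\<Sum>x\<le>n div 2. p x) + (\<Sum>x\<le>n div 2. if x \<in> ?B then real n * p x else 0)"
    unfolding sum_distrib_left sum.distrib[symmetric] by (rule sum.cong) (auto simp: algebra_simps)
  also have "(\<Sum>x\<le>n div 2. if x \<in> ?B then real n * p x else 0) = (\<Sum>x\<in>?B. real n * p x)"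
    by (subst sum.inter_filter[symmetric]) (auto intro: sum.cong)
  also have "\<epsilon> * real n * (\<Sum>x\<le>n div 2. p x) + (\<Sum>x\<in>?B. real n * p x) = \<epsilon> * real n + real n * (\<Sum>x\<in>?B. p x)"
    using p(2) by (simp add: sum_distrib_left)
  finally show ?thesis .
qed

lemma mean_deviation_little_o:
  fixes p :: "nat \<Rightarrow> nat \<Rightarrow> real" and \<mu> :: real
  assumes F: "F \<le> sequentially" and mu: "0 \<le> \<mu>" "\<mu> \<le> 1"
    and pmf: "eventually (\<lambda>n. (\<forall>x\<le>n div 2. 0 \<le> p n x) \<and> (\<Sum>x\<le>n div 2. p n x) = 1) F"
    and tail: "\<And>\<epsilon>. \<epsilon> > 0 \<Longrightarrow>
      ((\<lambda>n. \<Sum>x\<in>{x. x \<le> n div 2 \<and> \<bar>real x / real n - \<mu>\<bar> > \<epsilon>}. p n x) \<longlongrightarrow> 0) F"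
  shows "(\<lambda>n. (\<Sum>x\<le>n div 2. real x * p n x) - real n * \<mu>) \<in> o[F](\<lambda>n. real n)"
proof (rule landau_o.smallI)
  fix c :: real assume c: "c > 0"
  have c2: "c / 2 > 0" using c by simp
  have "eventually (\<lambda>n. (\<Sum>x\<in>{x. x \<le> n div 2 \<and> \<bar>real x / real n - \<mu>\<bar> > c / 2}. p n x) < c / 2) F"
    using order_tendstoD(2)[OF tail[OF c2] c2] .
  moreover have "eventually (\<lambda>n. n > 0) F" using filter_leD[OF F eventually_gt_at_top] .
  ultimately show "eventually (\<lambda>n. norm ((\<Sum>x\<le>n div 2. real x * p n x) - real n * \<mu>) \<le> c * norm (real n)) F"
    using pmf
  proof eventually_elim
    case (elim n)
    let ?tail = "\<Sum>x\<in>{x. x \<le> n div 2 \<and> \<bar>real x / real n - \<mu>\<bar> > c / 2}. p n x"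
    have "\<bar>(\<Sum>x\<le>n div 2. real x * p n x) - real n * \<mu>\<bar> \<le> c / 2 * real n + real n * ?tail"
      using elim mu c by (intro mean_deviation_le) auto
    also have "\<dots> \<le> c / 2 * real n + real n * (c / 2)"
      using elim by (intro add_left_mono mult_left_mono) auto
    finally show ?case by simp
  qed
qed

theorem theorem5p6:
  fixes \<alpha> \<beta> \<gamma> \<delta> :: real
  assumes "\<alpha> \<ge> 0" "\<beta> \<ge> 0" "\<gamma> \<ge> 0" "\<delta> \<ge> 0" "\<alpha> + \<beta> + \<gamma> + \<delta> = 1"
  defines "\<mu> \<equiv> (1 - sqrt (1 - 4 * (\<alpha> * \<gamma> + \<alpha> * \<delta> + \<beta> * \<gamma>))) / 2"
      and "F \<equiv> inf sequentially (principal {n::nat. \<alpha> * real n \<in> \<int> \<and> (\<alpha> + \<beta>) * real n \<in> \<int> \<and> (\<alpha> + \<gamma>) * real n \<in> \<int>})"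
      and "l \<equiv> \<lambda>n::nat. nat \<lfloor>\<alpha> * real n\<rfloor>"
      and "m \<equiv> \<lambda>n::nat. nat \<lfloor>(\<alpha> + \<beta>) * real n\<rfloor>"
      and "k \<equiv> \<lambda>n::nat. nat \<lfloor>(\<alpha> + \<gamma>) * real n\<rfloor>"
  shows "(\<forall>\<epsilon>>0. ((\<lambda>n. \<Sum>x\<in>{x. x \<le> n div 2 \<and> \<bar>real x / real n - \<mu>\<bar> > \<epsilon>}. pmf_p n (m n) (k n) (l n) x)
              \<longlongrightarrow> 0) F)
       \<and> (\<lambda>n. (\<Sum>x\<le>n div 2. real x * pmf_p n (m n) (k n) (l n) x) - real n * \<mu>) \<in> o[F](\<lambda>n. real n)"
proof -
  let ?p = "\<lambda>n. pmf_p n (m n) (k n) (l n)"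
  let ?tail = "\<lambda>\<epsilon> n. \<Sum>x\<in>{x. x \<le> n div 2 \<and> \<bar>real x / real n - \<mu>\<bar> > \<epsilon>}. ?p n x"
  have F: "F \<le> sequentially" unfolding F_def by simp
  have bound: "eventually (\<lambda>n. (\<forall>x\<le>n div 2. 0 \<le> ?p n x) \<and> (\<Sum>x\<le>n div 2. ?p n x) = 1
      \<and> ?tail \<epsilon> n \<le> 16 / \<epsilon>^4 / real n) F" if e: "\<epsilon> > 0" for \<epsilon>
  proof -
    have "eventually (\<lambda>n. 0 < n \<and> 2 / \<epsilon>^2 \<le> real n) F"
      using filterlim_real_sequentially unfolding filterlim_at_top
      by (intro filter_leD[OF F] eventually_conj eventually_gt_at_top) blast
    moreover have "eventually (\<lambda>n. \<alpha> * real n \<in> \<int> \<and> (\<alpha> + \<beta>) * real n \<in> \<int> \<and> (\<alpha> + \<gamma>) * real n \<in> \<int>) F"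
      unfolding F_def by (simp add: eventually_inf_principal)
    ultimately show ?thesis
      by eventually_elim (use pmf_p_tail_bound[OF assms(1-5) _ _ _ e] in \<open>simp add: l_def m_def k_def \<mu>_def\<close>)
  qed
  have tail: "(?tail \<epsilon> \<longlongrightarrow> 0) F" if e: "\<epsilon> > 0" for \<epsilon>
  proof (rule tendsto_sandwich[where f = "\<lambda>_. 0" and h = "\<lambda>n. 16 / \<epsilon>^4 / real n"])
    show "eventually (\<lambda>n. 0 \<le> ?tail \<epsilon> n) F" using bound[OF e] by eventually_elim (auto intro: sum_nonneg)
    show "eventually (\<lambda>n. ?tail \<epsilon> n \<le> 16 / \<epsilon>^4 / real n) F" using bound[OF e] by eventually_elim simp
    show "((\<lambda>n. 16 / \<epsilon>^4 / real n) \<longlongrightarrow> 0) F" by (rule tendsto_mono[OF F lim_const_over_n])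
  qed simp
  have "0 \<le> \<mu>" "\<mu> \<le> 1" using mu_smaller_root(1,2)[OF assms(1-5), folded \<mu>_def] by simp_all
  then have "(\<lambda>n. (\<Sum>x\<le>n div 2. real x * ?p n x) - real n * \<mu>) \<in> o[F](\<lambda>n. real n)"
    using mean_deviation_little_o[OF F] bound[of 1] tail by (simp add: eventually_mono)
  with tail show ?thesis by blast
qed

end
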